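(* Let $(t_1,\dots,t_k)$ be a vector with $t_i \ge \nu_i$ for every player $i$. Then there exists a profile of pure strategies forming an equilibrium in which the utility of each player $i$ is exactly $t_i$ if and only if there exists an infinite path in the game graph $G$ whose mean-payoff vector is $(t_1,\dots,t_k)$.
   Context: A $k$-player alternating move game has finite action sets $A_1,\dots,A_k$ and utilities $u_i:A_1\times\dots\times A_k\to[-1,1]$. In round $t$ player $j=1+(t\bmod k)$ chooses an action; the action vector $a^t$ consists of each player's most recent action; in round $t$ player $i$ receives $u_i(a^t)$ (utility $0$ in the first $k$ rounds). Strategies map histories to (distributions over) actions; pure strategies are deterministic. Player $i$'s utility under a profile is $\liminf_{t\to\infty}$ of the expected value of $\frac1t\sum_{s=1}^t u_i(a^s)$. An equilibrium is a profile from which no player can strictly improve his utility by unilateral deviation. The game graph $G$ has vertex set $(A_1\times\dots\times A_k)\times\{1,\dots,k\}$, vertex $(\vec a,i)$ being owned by player $i$; there is an edge from $(\vec a,i)$ to $(\vec b,i+1)$ (with $k+1$ read as $1$) iff $\vec a$ and $\vec b$ differ at most in coordinate $i$, and its weight is the vector $(u_1(\vec b),\dots,u_k(\vec b))$. The mean-payoff vector of an infinite path has $i$-th coordinate $\liminf_{t\to\infty}\frac1t\sum_{s=1}^t w_i(e_s)$, where $w_i$ is the $i$-th weight coordinate. For each player $i$, $\nu_i$ is the value of the two-player zero-sum mean-payoff game on $G$ with weights $w_i$ in which a maximizer controls player $i$'s vertices and a minimizer controls all other vertices (i.e., the best utility player $i$ can guarantee against all the other players jointly). *)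

theory Defs
  imports "HOL-Probability.Probability"
begin

(* Conventions: players are indexed 0..k-1 (paper's player i is our i-1).
   Rounds are numbered 1,2,...; in round t the mover is player (t mod k)
   (paper: player 1 + (t mod k)).
   A history of length n lists the actions chosen in rounds 1..n. *)

definition mover :: "nat \<Rightarrow> nat \<Rightarrow> nat" where
  "mover k t = t mod k"

definition valid_vec :: "nat \<Rightarrow> (nat \<Rightarrow> 'a set) \<Rightarrow> 'a list \<Rightarrow> bool" where
  "valid_vec k A a \<longleftrightarrow> length a = k \<and> (\<forall>l<k. a ! l \<in> A l)"

definition valid_strat :: "(nat \<Rightarrow> 'a set) \<Rightarrow> nat \<Rightarrow> ('a list \<Rightarrow> 'a pmf) \<Rightarrow> bool" where
  "valid_strat A i \<tau> \<longleftrightarrow> (\<forall>h. set_pmf (\<tau> h) \<subseteq> A i)"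

definition valid_profile :: "nat \<Rightarrow> (nat \<Rightarrow> 'a set) \<Rightarrow> (nat \<Rightarrow> 'a list \<Rightarrow> 'a pmf) \<Rightarrow> bool" where
  "valid_profile k A \<sigma> \<longleftrightarrow> (\<forall>i<k. valid_strat A i (\<sigma> i))"

primrec hist_dist :: "nat \<Rightarrow> (nat \<Rightarrow> 'a list \<Rightarrow> 'a pmf) \<Rightarrow> nat \<Rightarrow> 'a list pmf" where
  "hist_dist k \<sigma> 0 = return_pmf []"
| "hist_dist k \<sigma> (Suc n) =
     bind_pmf (hist_dist k \<sigma> n) (\<lambda>h. map_pmf (\<lambda>a. h @ [a]) (\<sigma> (mover k (Suc n)) h))"

(* action vector a^s in round s (s > k): each player's most recent action
   up to and including round s; player i last moved in round
   s - ((s - i) mod k), whose action is stored at index that minus 1 *)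
definition action_vec :: "nat \<Rightarrow> 'a list \<Rightarrow> nat \<Rightarrow> 'a list" where
  "action_vec k h s = map (\<lambda>i. h ! (s - (s - i) mod k - 1)) [0..<k]"

definition stage_util :: "nat \<Rightarrow> (nat \<Rightarrow> 'a list \<Rightarrow> real) \<Rightarrow> nat \<Rightarrow> 'a list \<Rightarrow> nat \<Rightarrow> real" where
  "stage_util k u i h s = (if s \<le> k then 0 else u i (action_vec k h s))"

definition game_utility ::
  "nat \<Rightarrow> (nat \<Rightarrow> 'a list \<Rightarrow> real) \<Rightarrow> (nat \<Rightarrow> 'a list \<Rightarrow> 'a pmf) \<Rightarrow> nat \<Rightarrow> ereal" where
  "game_utility k u \<sigma> i =
     liminf (\<lambda>t. ereal (measure_pmf.expectation (hist_dist k \<sigma> t)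
        (\<lambda>h. (\<Sum>s=1..t. stage_util k u i h s) / real t)))"

definition is_equilibrium ::
  "nat \<Rightarrow> (nat \<Rightarrow> 'a set) \<Rightarrow> (nat \<Rightarrow> 'a list \<Rightarrow> real) \<Rightarrow> (nat \<Rightarrow> 'a list \<Rightarrow> 'a pmf) \<Rightarrow> bool" where
  "is_equilibrium k A u \<sigma> \<longleftrightarrow> valid_profile k A \<sigma> \<and>
     (\<forall>i<k. \<forall>\<tau>. valid_strat A i \<tau> \<longrightarrow>
        game_utility k u (\<sigma>(i := \<tau>)) i \<le> game_utility k u \<sigma> i)"

definition pure_profile :: "(nat \<Rightarrow> 'a list \<Rightarrow> 'a) \<Rightarrow> nat \<Rightarrow> 'a list \<Rightarrow> 'a pmf" where
  "pure_profile f = (\<lambda>i h. return_pmf (f i h))"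

definition valid_pure :: "nat \<Rightarrow> (nat \<Rightarrow> 'a set) \<Rightarrow> (nat \<Rightarrow> 'a list \<Rightarrow> 'a) \<Rightarrow> bool" where
  "valid_pure k A f \<longleftrightarrow> (\<forall>i<k. \<forall>h. f i h \<in> A i)"

(* nu_i: the value of the zero-sum game in which player i maximises his utility
   against all other players jointly (lower value, pure strategies;
   mean-payoff games of perfect information are determined in pure strategies) *)
definition nu :: "nat \<Rightarrow> (nat \<Rightarrow> 'a set) \<Rightarrow> (nat \<Rightarrow> 'a list \<Rightarrow> real) \<Rightarrow> nat \<Rightarrow> ereal" where
  "nu k A u i =
     (SUP g\<in>{g. \<forall>h. g h \<in> A i}.
        INF f\<in>{f. valid_pure k A f}. game_utility k u (pure_profile (f(i := g))) i)"

definition is_vertex :: "nat \<Rightarrow> (nat \<Rightarrow> 'a set) \<Rightarrow> 'a list \<times> nat \<Rightarrow> bool" where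
  "is_vertex k A v \<longleftrightarrow> valid_vec k A (fst v) \<and> snd v < k"

definition is_edge :: "nat \<Rightarrow> 'a list \<times> nat \<Rightarrow> 'a list \<times> nat \<Rightarrow> bool" where
  "is_edge k v w \<longleftrightarrow> snd w = (snd v + 1) mod k \<and>
     (\<forall>l<k. l \<noteq> snd v \<longrightarrow> fst w ! l = fst v ! l)"

definition is_inf_path :: "nat \<Rightarrow> (nat \<Rightarrow> 'a set) \<Rightarrow> (nat \<Rightarrow> 'a list \<times> nat) \<Rightarrow> bool" where
  "is_inf_path k A p \<longleftrightarrow> (\<forall>n. is_vertex k A (p n)) \<and> (\<forall>n. is_edge k (p n) (p (Suc n)))"

(* i-th coordinate of the mean-payoff vector: the s-th edge (s >= 1) goes
   from p (s-1) to p s and has weight u_i(fst (p s)) *)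
definition mean_payoff :: "(nat \<Rightarrow> 'a list \<Rightarrow> real) \<Rightarrow> (nat \<Rightarrow> 'a list \<times> nat) \<Rightarrow> nat \<Rightarrow> ereal" where
  "mean_payoff u p i = liminf (\<lambda>t. ereal ((\<Sum>s=1..t. u i (fst (p s))) / real t))"

end

theory Submission
  imports Defs
begin

text \<open>The play of a pure profile is, after the first \<open>k\<close> rounds, a path of the game graph with the
  same mean payoffs. Conversely, given a path with mean payoff \<open>t\<close>, let all players follow it and,
  once some player \<open>i\<close> has left it, let the others punish \<open>i\<close> by playing minimising strategies of
  finite-horizon zero-sum games of lengths \<open>k, 2k, 3k, \<dots>\<close>. A maximiser who restarts optimal
  strategies of the game of length \<open>L\<close> guarantees its value divided by \<open>L\<close> up to \<open>O(k / L)\<close>, so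
  this value is at most \<open>L \<nu>\<^sub>i + O(k)\<close> from any starting vector. Telescoping the values over
  the \<open>O(\<surd>T)\<close> games started by round \<open>T\<close> bounds the deviator's average by \<open>t\<^sub>i + O(1/\<surd>T)\<close>,
  except for the path excess before a late deviation; that term vanishes in expectation because
  the probability of staying on the path decreases to a limit.\<close>

section \<open>Action vectors, plays and averages\<close>

lemma length_action_vec [simp]: "length (action_vec k h s) = k"
  by (simp add: action_vec_def)

lemma nth_action_vec: "l < k \<Longrightarrow> action_vec k h s ! l = h ! (s - (s - l) mod k - 1)"
  by (simp add: action_vec_def)

lemma action_vec_take: "0 < s \<Longrightarrow> s \<le> n \<Longrightarrow> action_vec k (take n h) s = action_vec k h s"
  unfolding action_vec_def by (auto intro!: map_cong nth_take)

lemma stage_util_take: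
  assumes "0 < s" "take s h = take s h'"
  shows "stage_util k u i h s = stage_util k u i h' s"
  using action_vec_take[OF assms(1) le_refl, of k h] action_vec_take[OF assms(1) le_refl, of k h'] assms(2)
  unfolding stage_util_def by metis

lemma action_vec_Suc:
  assumes "0 < k" "k \<le> s"
  shows "action_vec k h (Suc s) = (action_vec k h s)[Suc s mod k := h ! s]"
proof (rule nth_equalityI)
  fix l assume "l < length (action_vec k h (Suc s))"
  then have l: "l < k" and ls: "l \<le> s" using assms by auto
  have key: "(Suc s - l) mod k = 0 \<longleftrightarrow> Suc s mod k = l"
    using mod_eq_dvd_iff_nat[of l "Suc s" k] ls l by (simp add: dvd_eq_mod_eq_0)
  show "action_vec k h (Suc s) ! l = (action_vec k h s)[Suc s mod k := h ! s] ! l"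
  proof (cases "Suc s mod k = l")
    case True
    then show ?thesis using key l by (simp add: nth_action_vec)
  next
    case False
    then have "(Suc s - l) mod k = Suc ((s - l) mod k)"
      using key ls by (simp add: Suc_diff_le mod_Suc split: if_splits)
    then show ?thesis using False l by (simp add: nth_action_vec)
  qed
qed simp

text \<open>Player \<open>l\<close> last moved up to round \<open>s\<close> in round \<open>s - (s - l) mod k\<close>, whose action
  is stored at the index below.\<close>

lemma last_move_index:
  assumes "0 < k" "k \<le> s" "l < k"
  shows "s - (s - l) mod k - 1 < s" "Suc (s - (s - l) mod k - 1) mod k = l"
proof -
  have x: "(s - l) mod k < k" using assms by simp
  then show "s - (s - l) mod k - 1 < s" using assms by linarith
  have "Suc (s - (s - l) mod k - 1) = s - (s - l) mod k" using x assms by linarith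
  also have "\<dots> = l + ((s - l) - (s - l) mod k)"
    using assms x mod_less_eq_dividend[of "s - l" k] by linarith
  also have "\<dots> = l + k * ((s - l) div k)" by (simp add: minus_mod_eq_mult_div)
  finally show "Suc (s - (s - l) mod k - 1) mod k = l" using assms by simp
qed

lemma valid_action_vec:
  assumes "0 < k" "k \<le> s" "\<And>j. j < s \<Longrightarrow> h ! j \<in> A (Suc j mod k)"
  shows "valid_vec k A (action_vec k h s)"
  unfolding valid_vec_def
proof (intro conjI allI impI)
  fix l assume l: "l < k"
  show "action_vec k h s ! l \<in> A l"
    using assms(3)[OF last_move_index(1)[OF assms(1,2) l]] last_move_index(2)[OF assms(1,2) l] l
    by (simp add: nth_action_vec)
qed simp

lemma sum_stage_util:
  assumes "k \<le> T"
  shows "(\<Sum>s=1..T. stage_util k u i h s) = (\<Sum>r=Suc k..T. u i (action_vec k h r))"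
proof -
  have "(\<Sum>s=1..T. stage_util k u i h s) = (\<Sum>s=1..k. stage_util k u i h s) + (\<Sum>s=Suc k..T. stage_util k u i h s)"
    using assms by (subst sum.union_disjoint[symmetric]) (auto intro: sum.cong)
  also have "(\<Sum>s=1..k. stage_util k u i h s) = 0" by (simp add: stage_util_def)
  also have "(\<Sum>s=Suc k..T. stage_util k u i h s) = (\<Sum>r=Suc k..T. u i (action_vec k h r))"
    by (rule sum.cong) (auto simp: stage_util_def)
  finally show ?thesis by simp
qed

lemma length_hist_dist: "h \<in> set_pmf (hist_dist k \<sigma> n) \<Longrightarrow> length h = n"
  by (induction n arbitrary: h) auto

lemma map_take_hist_dist: "map_pmf (take m) (hist_dist k \<sigma> (m + l)) = hist_dist k \<sigma> m"
proof (induction l)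
  case 0
  have "map_pmf (take m) (hist_dist k \<sigma> m) = map_pmf id (hist_dist k \<sigma> m)"
    by (rule map_pmf_cong) (auto dest: length_hist_dist)
  then show ?case by simp
next
  case (Suc l)
  have "map_pmf (take m) (hist_dist k \<sigma> (m + Suc l))
      = bind_pmf (hist_dist k \<sigma> (m + l)) (\<lambda>h. map_pmf (\<lambda>a. take m (h @ [a])) (\<sigma> (mover k (Suc (m + l))) h))"
    by (simp add: map_bind_pmf map_pmf_comp)
  also have "\<dots> = bind_pmf (hist_dist k \<sigma> (m + l)) (\<lambda>h. return_pmf (take m h))"
  proof (rule bind_pmf_cong[OF refl])
    fix h assume "h \<in> set_pmf (hist_dist k \<sigma> (m + l))"
    then have "length h = m + l" by (rule length_hist_dist)
    then show "map_pmf (\<lambda>a. take m (h @ [a])) (\<sigma> (mover k (Suc (m + l))) h) = return_pmf (take m h)"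
      by (simp add: map_pmf_const)
  qed
  also have "\<dots> = map_pmf (take m) (hist_dist k \<sigma> (m + l))" by (simp add: map_pmf_def)
  finally show ?case using Suc by simp
qed

lemma prob_take_hist_dist:
  assumes "m \<le> T"
  shows "measure_pmf.prob (hist_dist k \<sigma> T) {h. P (take m h)} = measure_pmf.prob (hist_dist k \<sigma> m) {h. P h}"
proof -
  have "hist_dist k \<sigma> m = map_pmf (take m) (hist_dist k \<sigma> T)"
    using map_take_hist_dist[of m k \<sigma> "T - m"] assms by simp
  then show ?thesis by simp
qed

primrec pure_play :: "nat \<Rightarrow> (nat \<Rightarrow> 'a list \<Rightarrow> 'a) \<Rightarrow> nat \<Rightarrow> 'a list" where
  "pure_play k f 0 = []"
| "pure_play k f (Suc n) = pure_play k f n @ [f (mover k (Suc n)) (pure_play k f n)]"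

lemma length_pure_play [simp]: "length (pure_play k f n) = n"
  by (induction n) auto

lemma hist_dist_pure_profile: "hist_dist k (pure_profile f) n = return_pmf (pure_play k f n)"
  by (induction n) (auto simp: pure_profile_def bind_return_pmf)

lemma take_pure_play: "m \<le> n \<Longrightarrow> take m (pure_play k f n) = pure_play k f m"
  by (induction n) (auto simp: le_Suc_eq)

lemma nth_pure_play: "j < n \<Longrightarrow> pure_play k f n ! j = f (mover k (Suc j)) (pure_play k f j)"
  by (induction n) (auto simp: less_Suc_eq nth_append)

lemma stage_util_pure_play:
  "0 < s \<Longrightarrow> s \<le> t \<Longrightarrow> stage_util k u i (pure_play k f t) s = stage_util k u i (pure_play k f s) s"
  using stage_util_take[of s "pure_play k f t" "pure_play k f s" k u i]
    take_pure_play[of s t k f] take_pure_play[of s s k f] by simp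

lemma game_utility_pure_profile: "game_utility k u (pure_profile f) i =
   liminf (\<lambda>t. ereal ((\<Sum>s=1..t. stage_util k u i (pure_play k f s) s) / real t))"
proof -
  have "(\<Sum>s=1..t. stage_util k u i (pure_play k f t) s) = (\<Sum>s=1..t. stage_util k u i (pure_play k f s) s)" for t
    by (rule sum.cong[OF refl], rule stage_util_pure_play) auto
  then show ?thesis unfolding game_utility_def hist_dist_pure_profile by simp
qed

lemma liminf_ereal_eq_if_diff_tendsto_0:
  fixes x y :: "nat \<Rightarrow> real"
  assumes "(\<lambda>t. x t - y t) \<longlonglongrightarrow> 0"
  shows "liminf (\<lambda>t. ereal (x t)) = liminf (\<lambda>t. ereal (y t))"
proof -
  have "(\<lambda>t. ereal (x t - y t)) \<longlonglongrightarrow> ereal 0" using assms by (simp add: tendsto_ereal)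
  then have "liminf (\<lambda>t. ereal (x t - y t) + ereal (y t)) = ereal 0 + liminf (\<lambda>t. ereal (y t))"
    by (rule ereal_liminf_lim_add) simp
  then show ?thesis by simp
qed

lemma liminf_average_eq_if_bounded_diff:
  fixes a b :: "nat \<Rightarrow> real"
  assumes "\<And>t. \<bar>(\<Sum>s=1..t. a s) - (\<Sum>s=1..t. b s)\<bar> \<le> C"
  shows "liminf (\<lambda>t. ereal ((\<Sum>s=1..t. a s) / real t)) = liminf (\<lambda>t. ereal ((\<Sum>s=1..t. b s) / real t))"
proof (rule liminf_ereal_eq_if_diff_tendsto_0)
  have "norm ((\<Sum>s=1..t. a s) / real t - (\<Sum>s=1..t. b s) / real t) \<le> C / real t" for t
    using assms[of t] by (simp add: diff_divide_distrib[symmetric] divide_right_mono)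
  then have "\<forall>\<^sub>F t in sequentially. norm ((\<Sum>s=1..t. a s) / real t - (\<Sum>s=1..t. b s) / real t) \<le> C / real t"
    by simp
  then show "(\<lambda>t. (\<Sum>s=1..t. a s) / real t - (\<Sum>s=1..t. b s) / real t) \<longlonglongrightarrow> 0"
    by (rule Lim_null_comparison) (rule lim_const_over_n)
qed

lemma sum_shift_diff_le:
  fixes b :: "nat \<Rightarrow> real"
  assumes "\<And>s. \<bar>b s\<bar> \<le> B"
  shows "\<bar>(\<Sum>s=1..t. b (s + m)) - (\<Sum>s=1..t. b s)\<bar> \<le> 2 * B * m"
proof (induction m)
  case (Suc m)
  have "(\<Sum>s=1..t. b (s + Suc m)) = (\<Sum>s=1..t. b (s + m)) + b (Suc t + m) - b (1 + m)"
    using sum_Suc_diff[of 1 t "\<lambda>s. b (s + m)"] by (simp add: sum_subtractf)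
  moreover have "\<bar>b (Suc t + m)\<bar> \<le> B" "\<bar>b (1 + m)\<bar> \<le> B" using assms by auto
  ultimately show ?case using Suc.IH by (simp add: algebra_simps)
qed simp

lemma liminf_average_shift:
  fixes b :: "nat \<Rightarrow> real"
  assumes "\<And>s. \<bar>b s\<bar> \<le> B"
  shows "liminf (\<lambda>t. ereal ((\<Sum>s=1..t. b (s + m)) / real t)) = liminf (\<lambda>t. ereal ((\<Sum>s=1..t. b s) / real t))"
  by (rule liminf_average_eq_if_bounded_diff[OF sum_shift_diff_le[OF assms]])

lemma liminf_ge_if_eventually_ge:
  fixes x :: "nat \<Rightarrow> real"
  assumes "\<And>T. N \<le> T \<Longrightarrow> c - K / real T \<le> x T"
  shows "ereal c \<le> liminf (\<lambda>T. ereal (x T))"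
proof -
  have "(\<lambda>T. ereal (c - K / real T)) \<longlonglongrightarrow> ereal (c - 0)"
    by (intro tendsto_ereal tendsto_diff tendsto_const lim_const_over_n)
  then have "liminf (\<lambda>T. ereal (c - K / real T)) = ereal c"
    using lim_imp_Liminf by (metis diff_zero sequentially_bot)
  moreover have "liminf (\<lambda>T. ereal (c - K / real T)) \<le> liminf (\<lambda>T. ereal (x T))"
    by (rule Liminf_mono) (use assms in \<open>auto intro!: eventually_sequentiallyI[of N]\<close>)
  ultimately show ?thesis by simp
qed

lemma liminf_max_0_le:
  fixes y :: "nat \<Rightarrow> real"
  assumes "liminf (\<lambda>T. ereal (y T)) \<le> 0"
  shows "liminf (\<lambda>T. ereal (max (y T) 0)) \<le> 0"
proof (rule ccontr)
  assume "\<not> ?thesis"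
  then obtain r where r: "0 < ereal r" "ereal r < liminf (\<lambda>T. ereal (max (y T) 0))"
    using ereal_dense2 by (metis less_le_not_le linorder_le_less_linear)
  then have "eventually (\<lambda>T. ereal r < ereal (max (y T) 0)) sequentially"
    using le_Liminf_iff[of "liminf (\<lambda>T. ereal (max (y T) 0))" sequentially "\<lambda>T. ereal (max (y T) 0)"]
    by simp
  then have "eventually (\<lambda>T. ereal r \<le> ereal (y T)) sequentially"
    by eventually_elim (use r(1) in \<open>auto simp: max_def split: if_splits\<close>)
  then have "ereal r \<le> liminf (\<lambda>T. ereal (y T))" by (rule Liminf_bounded)
  then show False using assms r(1) by (metis ereal_less_eq(3) not_le order_trans zero_ereal_def)
qed

lemma sum_le_telescope:
  fixes x P e :: "nat \<Rightarrow> real"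
  assumes "\<And>r. r0 \<le> r \<Longrightarrow> r \<le> t \<Longrightarrow> x r \<le> P r - P (Suc r) + e r" "r0 \<le> Suc t"
  shows "(\<Sum>r=r0..t. x r) \<le> P r0 - P (Suc t) + (\<Sum>r=r0..t. e r)"
proof -
  have "(\<Sum>r=r0..t. x r) \<le> (\<Sum>r=r0..t. e r - (P (Suc r) - P r))"
    by (rule sum_mono) (use assms(1) in force)
  also have "\<dots> = (\<Sum>r=r0..t. e r) - (P (Suc t) - P r0)"
    using sum_Suc_diff[OF assms(2), of P] by (simp add: sum_subtractf)
  finally show ?thesis by simp
qed

lemma Max_image_le_Max_image_add:
  assumes "finite S" "S \<noteq> {}" "\<And>b. b \<in> S \<Longrightarrow> f b \<le> g b + (e::real)"
  shows "Max (f ` S) \<le> Max (g ` S) + e"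
proof -
  have "Max (f ` S) \<in> f ` S" using Max_in[of "f ` S"] assms by auto
  then obtain b where "b \<in> S" "Max (f ` S) = f b" by auto
  moreover have "g b \<le> Max (g ` S)" using assms \<open>b \<in> S\<close> by auto
  ultimately show ?thesis using assms(3) by force
qed

lemma Min_image_le_Min_image_add:
  assumes "finite S" "S \<noteq> {}" "\<And>b. b \<in> S \<Longrightarrow> f b \<le> g b + (e::real)"
  shows "Min (f ` S) \<le> Min (g ` S) + e"
proof -
  have "Min (g ` S) \<in> g ` S" using Min_in[of "g ` S"] assms by auto
  then obtain b where "b \<in> S" "Min (g ` S) = g b" by auto
  moreover have "Min (f ` S) \<le> f b" using assms \<open>b \<in> S\<close> by auto
  ultimately show ?thesis using assms(3) by force
qed

lemma cyclic_dist_Suc: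
  fixes l j k :: nat
  assumes "l < k" "j < k" "l \<noteq> j"
  shows "(l + k - j) mod k = Suc ((l + k - Suc j mod k) mod k)"
proof (cases "Suc j = k")
  case True
  then show ?thesis using assms by (simp add: Suc_diff_le)
next
  case False
  then have "Suc j mod k = Suc j" using assms by simp
  then show ?thesis using assms
    by (cases "l < j") (auto simp: mod_if Suc_diff_le)
qed

section \<open>Finite-horizon zero-sum games\<close>

locale alternating_game =
  fixes k :: nat and A :: "nat \<Rightarrow> 'a set" and u :: "nat \<Rightarrow> 'a list \<Rightarrow> real"
  assumes k_pos: "0 < k"
    and finite_A: "\<And>i. i < k \<Longrightarrow> finite (A i)"
    and A_nonempty: "\<And>i. i < k \<Longrightarrow> A i \<noteq> {}"
    and u_bounded: "\<And>i a. i < k \<Longrightarrow> valid_vec k A a \<Longrightarrow> \<bar>u i a\<bar> \<le> 1"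
begin

lemma mover_less: "mover k n < k"
  using k_pos by (simp add: mover_def)

lemma valid_vec_update: "valid_vec k A a \<Longrightarrow> j < k \<Longrightarrow> b \<in> A j \<Longrightarrow> valid_vec k A (a[j:=b])"
  unfolding valid_vec_def by (auto simp: nth_list_update)

text \<open>\<open>horizon_value d n a j\<close> is the value, for player \<open>d\<close>, of the game of \<open>n\<close> moves started at
  the action vector \<open>a\<close> with player \<open>j\<close> to move, in which \<open>d\<close> maximises and all other players
  jointly minimise the total payoff of \<open>d\<close>.\<close>

primrec horizon_value :: "nat \<Rightarrow> nat \<Rightarrow> 'a list \<Rightarrow> nat \<Rightarrow> real" where
  "horizon_value d 0 a j = 0"
| "horizon_value d (Suc n) a j = (if j = d then Max else Min)
      ((\<lambda>b. u d (a[j:=b]) + horizon_value d n (a[j:=b]) (Suc j mod k)) ` A j)"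

definition move_value :: "nat \<Rightarrow> nat \<Rightarrow> 'a list \<Rightarrow> nat \<Rightarrow> 'a \<Rightarrow> real" where
  "move_value d n a j b = u d (a[j:=b]) + horizon_value d n (a[j:=b]) (Suc j mod k)"

lemma horizon_value_Suc:
  "horizon_value d (Suc n) a j = (if j = d then Max else Min) (move_value d n a j ` A j)"
  by (simp add: move_value_def)

declare horizon_value.simps(2) [simp del]

lemma horizon_value_attained:
  assumes "j < k"
  shows "\<exists>b\<in>A j. move_value d n a j b = horizon_value d (Suc n) a j"
proof -
  have f: "finite (move_value d n a j ` A j)" "move_value d n a j ` A j \<noteq> {}"
    using finite_A A_nonempty assms by auto
  show ?thesis using Max_in[OF f] Min_in[OF f] by (auto simp: horizon_value_Suc)
qed

definition optimal_move :: "nat \<Rightarrow> nat \<Rightarrow> 'a list \<Rightarrow> nat \<Rightarrow> 'a" where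
  "optimal_move d n a j = (SOME b. b \<in> A j \<and> move_value d n a j b = horizon_value d (Suc n) a j)"

lemma optimal_move:
  assumes "j < k"
  shows optimal_move_in: "optimal_move d n a j \<in> A j"
    and move_value_optimal_move: "move_value d n a j (optimal_move d n a j) = horizon_value d (Suc n) a j"
  using someI_ex[OF horizon_value_attained[OF assms, of d n a, unfolded Bex_def]]
  unfolding optimal_move_def by auto

lemma move_value_le_horizon_value:
  assumes "j < k" "b \<in> A j" "j = d \<or> b = optimal_move d n a j"
  shows "move_value d n a j b \<le> horizon_value d (Suc n) a j"
proof (cases "j = d")
  case True
  have "finite (move_value d n a j ` A j)" using finite_A assms by auto
  then show ?thesis using True assms by (auto simp: horizon_value_Suc)
qed (use move_value_optimal_move assms in auto)

lemma horizon_value_le_move_value: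
  assumes "j < k" "b \<in> A j" "j \<noteq> d \<or> b = optimal_move d n a j"
  shows "horizon_value d (Suc n) a j \<le> move_value d n a j b"
proof (cases "j \<noteq> d")
  case True
  have "finite (move_value d n a j ` A j)" using finite_A assms by auto
  then show ?thesis using True assms by (auto simp: horizon_value_Suc)
qed (use move_value_optimal_move assms in auto)

lemma abs_horizon_value_le:
  "valid_vec k A a \<Longrightarrow> j < k \<Longrightarrow> d < k \<Longrightarrow> \<bar>horizon_value d n a j\<bar> \<le> n"
proof (induction n arbitrary: a j)
  case (Suc n)
  obtain b where b: "b \<in> A j" "move_value d n a j b = horizon_value d (Suc n) a j"
    using horizon_value_attained Suc by blast
  have v: "valid_vec k A (a[j:=b])" using valid_vec_update Suc b by auto
  have "\<bar>u d (a[j:=b])\<bar> \<le> 1" using u_bounded Suc v by auto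
  moreover have "\<bar>horizon_value d n (a[j:=b]) (Suc j mod k)\<bar> \<le> n" using Suc.IH[OF v] Suc k_pos by auto
  ultimately show ?case using b(2) unfolding move_value_def by simp
qed simp

text \<open>Coordinates at cyclic distance \<open>(l + k - j) mod k\<close> from the mover \<open>j\<close> are overwritten within
  that many moves, so if \<open>a\<close> and \<open>a'\<close> differ only at distance below \<open>c\<close>, the two games differ in
  at most \<open>c\<close> stage payoffs.\<close>

lemma horizon_value_le_if_differ_near:
  "valid_vec k A a \<Longrightarrow> valid_vec k A a' \<Longrightarrow> j < k \<Longrightarrow> d < k \<Longrightarrow>
   (\<forall>l<k. a!l \<noteq> a'!l \<longrightarrow> (l + k - j) mod k < c) \<Longrightarrow>
   horizon_value d n a j \<le> horizon_value d n a' j + 2 * c"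
proof (induction n arbitrary: a a' j c)
  case (Suc n)
  show ?case
  proof (cases c)
    case 0
    then have "a = a'" using Suc.prems by (auto simp: valid_vec_def intro: nth_equalityI)
    then show ?thesis by simp
  next
    case (Suc c')
    have step: "move_value d n a j b \<le> move_value d n a' j b + 2 * c" if b: "b \<in> A j" for b
    proof -
      have v: "valid_vec k A (a[j:=b])" "valid_vec k A (a'[j:=b])"
        using valid_vec_update Suc.prems b by auto
      have len: "length a = k" "length a' = k" using Suc.prems by (auto simp: valid_vec_def)
      have "\<forall>l<k. (a[j:=b])!l \<noteq> (a'[j:=b])!l \<longrightarrow> (l + k - Suc j mod k) mod k < c'"
      proof (intro allI impI)
        fix l assume l: "l < k" "(a[j:=b])!l \<noteq> (a'[j:=b])!l"
        then have "l \<noteq> j" using len by auto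
        then have "a!l \<noteq> a'!l" using l by (simp add: nth_list_update)
        then show "(l + k - Suc j mod k) mod k < c'"
          using Suc.prems cyclic_dist_Suc[of l k j] l \<open>l \<noteq> j\<close> \<open>c = Suc c'\<close> by auto
      qed
      then have "horizon_value d n (a[j:=b]) (Suc j mod k) \<le> horizon_value d n (a'[j:=b]) (Suc j mod k) + 2 * c'"
        using Suc.IH[OF v] Suc.prems k_pos by auto
      moreover have "u d (a[j:=b]) \<le> u d (a'[j:=b]) + 2"
        using u_bounded[OF Suc.prems(4) v(1)] u_bounded[OF Suc.prems(4) v(2)] by linarith
      ultimately show ?thesis unfolding move_value_def using \<open>c = Suc c'\<close> by simp
    qed
    have f: "finite (A j)" "A j \<noteq> {}" using finite_A A_nonempty Suc.prems by auto
    show ?thesis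
      using Max_image_le_Max_image_add[OF f step] Min_image_le_Min_image_add[OF f step]
      unfolding horizon_value_Suc by (cases "j = d") auto
  qed
qed simp

lemma horizon_value_le_add:
  "valid_vec k A a \<Longrightarrow> valid_vec k A a' \<Longrightarrow> j < k \<Longrightarrow> d < k \<Longrightarrow>
   horizon_value d n a j \<le> horizon_value d n a' j + 2 * k"
  by (rule horizon_value_le_if_differ_near) auto

definition valid_history :: "'a list \<Rightarrow> bool" where
  "valid_history h \<longleftrightarrow> (\<forall>j<length h. h ! j \<in> A (Suc j mod k))"

lemma valid_history_action_vec:
  "valid_history h \<Longrightarrow> k \<le> s \<Longrightarrow> s \<le> length h \<Longrightarrow> valid_vec k A (action_vec k h s)"
  by (rule valid_action_vec[OF k_pos]) (auto simp: valid_history_def)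

lemma abs_stage_util_le:
  "valid_history h \<Longrightarrow> s \<le> length h \<Longrightarrow> i < k \<Longrightarrow> \<bar>stage_util k u i h s\<bar> \<le> 1"
  unfolding stage_util_def using u_bounded valid_history_action_vec by auto

lemma valid_history_pure_play: "valid_pure k A f \<Longrightarrow> valid_history (pure_play k f n)"
  using nth_pure_play[of _ n k f] mover_less[of "Suc _"] unfolding valid_history_def valid_pure_def
  by (simp add: mover_def)

lemma abs_stage_util_pure_play_le:
  "valid_pure k A f \<Longrightarrow> i < k \<Longrightarrow> \<bar>stage_util k u i (pure_play k f s) s\<bar> \<le> 1"
  by (rule abs_stage_util_le[OF valid_history_pure_play]) auto

lemma exists_path_of_pure_profile:
  assumes f: "valid_pure k A f" and util: "\<forall>i<k. game_utility k u (pure_profile f) i = ereal (t i)"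
  shows "\<exists>p. is_inf_path k A p \<and> (\<forall>i<k. mean_payoff u p i = ereal (t i))"
proof -
  define h where "h n = pure_play k f n" for n
  define p where "p n = (action_vec k (h (n + k)) (n + k), Suc (n + k) mod k)" for n
  have "is_vertex k A (p n)" for n
    unfolding is_vertex_def p_def h_def
    using valid_history_action_vec[OF valid_history_pure_play[OF f]] k_pos by auto
  moreover have "is_edge k (p n) (p (Suc n))" for n
  proof -
    have "action_vec k (h (Suc (n + k))) (n + k) = action_vec k (h (n + k)) (n + k)"
      using action_vec_take[of "n + k" "n + k" k "h (Suc (n + k))"] take_pure_play[of "n + k" "Suc (n + k)" k f]
        k_pos unfolding h_def by simp
    then show ?thesis unfolding is_edge_def p_def
      using action_vec_Suc[OF k_pos, of "n + k" "h (Suc (n + k))"] by (auto simp: mod_Suc_eq)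
  qed
  moreover have "mean_payoff u p i = ereal (t i)" if i: "i < k" for i
  proof -
    have "stage_util k u i (h (s + k)) (s + k) = u i (fst (p s))" if "0 < s" for s
      using that unfolding stage_util_def p_def by (simp add: add.commute)
    then have "mean_payoff u p i = liminf (\<lambda>t. ereal ((\<Sum>s=1..t. stage_util k u i (h (s + k)) (s + k)) / real t))"
      unfolding mean_payoff_def by simp
    also have "\<dots> = liminf (\<lambda>t. ereal ((\<Sum>s=1..t. stage_util k u i (h s) s) / real t))"
      by (rule liminf_average_shift) (use abs_stage_util_pure_play_le[OF f i] in \<open>simp add: h_def\<close>)
    also have "\<dots> = ereal (t i)" using util i unfolding game_utility_pure_profile h_def by metis
    finally show ?thesis .
  qed
  ultimately show ?thesis unfolding is_inf_path_def by blast
qed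

text \<open>\<open>\<rho> r\<close> counts the moves, from round \<open>r\<close> on, left in a finite-horizon game being played. If
  the move of round \<open>r\<close> is optimal for that game, the stage payoff minus \<open>c\<close> is bounded by the drop
  of the potential, except at the last move of a game, where the next potential is charged back.\<close>

definition potential :: "nat \<Rightarrow> real \<Rightarrow> (nat \<Rightarrow> nat) \<Rightarrow> 'a list \<Rightarrow> nat \<Rightarrow> real" where
  "potential d c \<rho> h r = horizon_value d (\<rho> r) (action_vec k h (r - 1)) (r mod k) - real (\<rho> r) * c"

lemma history_step:
  assumes h: "valid_history h" and r: "Suc k \<le> r" "r \<le> length h"
  shows "valid_vec k A (action_vec k h (r - 1))"
    and "action_vec k h r = (action_vec k h (r - 1))[r mod k := h ! (r - 1)]"
    and "h ! (r - 1) \<in> A (r mod k)"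
proof -
  show "valid_vec k A (action_vec k h (r - 1))"
    by (rule valid_history_action_vec[OF h]) (use r in auto)
  show "action_vec k h r = (action_vec k h (r - 1))[r mod k := h ! (r - 1)]"
    using action_vec_Suc[OF k_pos, of "r - 1" h] r by simp
  show "h ! (r - 1) \<in> A (r mod k)"
    using h r unfolding valid_history_def by (metis Suc_diff_1 Suc_le_lessD diff_less gr_zeroI le_less_trans not_less_zero zero_less_one)
qed

lemma stage_payoff_le_potential_drop:
  assumes h: "valid_history h" and r: "Suc k \<le> r" "r \<le> length h"
    and \<rho>: "1 \<le> \<rho> r" "1 < \<rho> r \<Longrightarrow> \<rho> (Suc r) = \<rho> r - 1"
    and move: "r mod k = d \<or> h ! (r - 1) = optimal_move d (\<rho> r - 1) (action_vec k h (r - 1)) (r mod k)"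
  shows "u d (action_vec k h r) - c \<le> potential d c \<rho> h r - potential d c \<rho> h (Suc r)
          + (if \<rho> r = 1 then potential d c \<rho> h (Suc r) else 0)"
proof -
  obtain m where m: "\<rho> r = Suc m" using \<rho>(1) by (cases "\<rho> r") auto
  have "move_value d m (action_vec k h (r - 1)) (r mod k) (h ! (r - 1))
      \<le> horizon_value d (Suc m) (action_vec k h (r - 1)) (r mod k)"
    by (rule move_value_le_horizon_value) (use history_step[OF h r] move m k_pos in auto)
  then have "u d (action_vec k h r) + horizon_value d m (action_vec k h r) (Suc r mod k)
      \<le> horizon_value d (Suc m) (action_vec k h (r - 1)) (r mod k)"
    unfolding move_value_def using history_step(2)[OF h r] by (simp add: mod_Suc_eq)
  moreover have "m \<noteq> 0 \<Longrightarrow> \<rho> (Suc r) = m" using \<rho> m by simp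
  ultimately show ?thesis using m unfolding potential_def by (cases "m = 0") (simp_all add: algebra_simps)
qed

lemma stage_payoff_ge_potential_drop:
  assumes h: "valid_history h" and r: "Suc k \<le> r" "r \<le> length h"
    and \<rho>: "1 \<le> \<rho> r" "1 < \<rho> r \<Longrightarrow> \<rho> (Suc r) = \<rho> r - 1"
    and move: "r mod k \<noteq> d \<or> h ! (r - 1) = optimal_move d (\<rho> r - 1) (action_vec k h (r - 1)) (r mod k)"
  shows "u d (action_vec k h r) - c \<ge> potential d c \<rho> h r - potential d c \<rho> h (Suc r)
          + (if \<rho> r = 1 then potential d c \<rho> h (Suc r) else 0)"
proof -
  obtain m where m: "\<rho> r = Suc m" using \<rho>(1) by (cases "\<rho> r") auto
  have "horizon_value d (Suc m) (action_vec k h (r - 1)) (r mod k)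
      \<le> move_value d m (action_vec k h (r - 1)) (r mod k) (h ! (r - 1))"
    by (rule horizon_value_le_move_value) (use history_step[OF h r] move m k_pos in auto)
  then have "horizon_value d (Suc m) (action_vec k h (r - 1)) (r mod k)
      \<le> u d (action_vec k h r) + horizon_value d m (action_vec k h r) (Suc r mod k)"
    unfolding move_value_def using history_step(2)[OF h r] by (simp add: mod_Suc_eq)
  moreover have "m \<noteq> 0 \<Longrightarrow> \<rho> (Suc r) = m" using \<rho> m by simp
  ultimately show ?thesis using m unfolding potential_def by (cases "m = 0") (simp_all add: algebra_simps)
qed

lemma abs_potential_le:
  assumes "valid_history h" "Suc k \<le> r" "r \<le> Suc (length h)" "d < k"
  shows "\<bar>potential d c \<rho> h r\<bar> \<le> real (\<rho> r) * (1 + \<bar>c\<bar>)"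
proof -
  have "\<bar>horizon_value d (\<rho> r) (action_vec k h (r - 1)) (r mod k)\<bar> \<le> \<rho> r"
    using abs_horizon_value_le valid_history_action_vec assms k_pos by auto
  moreover have "\<bar>real (\<rho> r) * c\<bar> = real (\<rho> r) * \<bar>c\<bar>" by (simp add: abs_mult)
  ultimately show ?thesis unfolding potential_def by (simp add: algebra_simps)
qed

definition default_vec :: "'a list" where
  "default_vec = map (\<lambda>l. SOME b. b \<in> A l) [0..<k]"

lemma valid_default_vec: "valid_vec k A default_vec"
  unfolding valid_vec_def default_vec_def using A_nonempty by (auto simp: some_in_eq)

text \<open>The maximiser below plays optimally in consecutive games of \<open>L\<close> moves, the first one
  starting in round \<open>Suc k\<close>.\<close>

definition block_moves_left :: "nat \<Rightarrow> nat \<Rightarrow> nat" where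
  "block_moves_left L r = L - (r - Suc k) mod L"

lemma block_moves_left:
  assumes "0 < L" "Suc k \<le> r"
  shows "1 \<le> block_moves_left L r" "block_moves_left L r \<le> L"
    and "1 < block_moves_left L r \<Longrightarrow> block_moves_left L (Suc r) = block_moves_left L r - 1"
    and "block_moves_left L r = 1 \<Longrightarrow> block_moves_left L (Suc r) = L"
    and "k dvd L \<Longrightarrow> block_moves_left L r = 1 \<Longrightarrow> Suc r mod k = Suc k mod k"
proof -
  have x: "(r - Suc k) mod L < L" using assms by simp
  then show "1 \<le> block_moves_left L r" "block_moves_left L r \<le> L"
    unfolding block_moves_left_def by auto
  have e: "Suc r - Suc k = Suc (r - Suc k)" using assms by simp
  show "block_moves_left L (Suc r) = block_moves_left L r - 1" if "1 < block_moves_left L r"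
  proof -
    have "Suc ((r - Suc k) mod L) \<noteq> L" using that unfolding block_moves_left_def by simp
    then have "(Suc r - Suc k) mod L = Suc ((r - Suc k) mod L)" unfolding e by (simp add: mod_Suc)
    then show ?thesis unfolding block_moves_left_def by simp
  qed
  have last: "(Suc r - Suc k) mod L = 0" if "block_moves_left L r = 1"
    using that x unfolding e block_moves_left_def by (simp add: mod_Suc)
  then show "block_moves_left L r = 1 \<Longrightarrow> block_moves_left L (Suc r) = L"
    unfolding block_moves_left_def by simp
  show "Suc r mod k = Suc k mod k" if "k dvd L" "block_moves_left L r = 1"
  proof -
    have "L dvd Suc r - Suc k" using last[OF that(2)] by (simp add: dvd_eq_mod_eq_0)
    then have "k dvd Suc r - Suc k" using that(1) by (rule dvd_trans[rotated])
    then show ?thesis using mod_eq_dvd_iff_nat[of "Suc k" "Suc r" k] assms(2) by simp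
  qed
qed

definition block_strategy :: "nat \<Rightarrow> nat \<Rightarrow> 'a list \<Rightarrow> 'a" where
  "block_strategy d L h = (if length h < k then (SOME b. b \<in> A d)
      else optimal_move d (block_moves_left L (Suc (length h)) - 1) (action_vec k h (length h)) d)"

lemma block_strategy_in: "d < k \<Longrightarrow> block_strategy d L h \<in> A d"
  unfolding block_strategy_def using optimal_move_in A_nonempty by (auto simp: some_in_eq)

lemma block_strategy_stage_ge:
  fixes c :: real
  assumes d: "d < k" and L: "0 < L" "k dvd L"
    and c: "real L * c \<le> horizon_value d L default_vec (Suc k mod k) - 2 * k"
    and F: "valid_pure k A F" "F d = block_strategy d L"
    and r: "Suc k \<le> r" "r \<le> T"
  defines "h \<equiv> pure_play k F T"
  shows "c - u d (action_vec k h r)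
    \<le> potential d c (block_moves_left L) h (Suc r) - potential d c (block_moves_left L) h r"
proof -
  have hv: "valid_history h" unfolding h_def by (rule valid_history_pure_play[OF F(1)])
  have rh: "r \<le> length h" using r unfolding h_def by simp
  have "h ! (r - 1) = optimal_move d (block_moves_left L r - 1) (action_vec k h (r - 1)) d"
    if "r mod k = d"
  proof -
    have "h ! (r - 1) = block_strategy d L (pure_play k F (r - 1))"
      using nth_pure_play[of "r - 1" T k F] r that F(2) unfolding h_def by (simp add: mover_def)
    moreover have "action_vec k (pure_play k F (r - 1)) (r - 1) = action_vec k h (r - 1)"
      using action_vec_take[of "r - 1" "r - 1" k h] take_pure_play[of "r - 1" T k F] r k_pos
      unfolding h_def by simp
    moreover have "\<not> r - 1 < k" "Suc (r - 1) = r" using r by auto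
    ultimately show ?thesis unfolding block_strategy_def by simp
  qed
  then have move: "r mod k \<noteq> d \<or> h ! (r - 1) = optimal_move d (block_moves_left L r - 1) (action_vec k h (r - 1)) (r mod k)"
    by auto
  have last_ok: "0 \<le> potential d c (block_moves_left L) h (Suc r)" if last: "block_moves_left L r = 1"
  proof -
    have "horizon_value d L default_vec (Suc k mod k) \<le> horizon_value d L (action_vec k h r) (Suc k mod k) + 2 * k"
      using horizon_value_le_add[OF valid_default_vec valid_history_action_vec[OF hv _ rh]] d r k_pos
      by simp
    then show ?thesis using c block_moves_left(4)[OF L(1) r(1) last] block_moves_left(5)[OF L(1) r(1) L(2) last] unfolding potential_def by simp
  qed
  show ?thesis
    using stage_payoff_ge_potential_drop[OF hv r(1) rh block_moves_left(1,3)[OF L(1) r(1)] move, of c]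
      last_ok by (cases "block_moves_left L r = 1") auto
qed

lemma block_strategy_average_ge:
  fixes c :: real
  assumes d: "d < k" and L: "0 < L" "k dvd L"
    and c: "real L * c \<le> horizon_value d L default_vec (Suc k mod k) - 2 * k"
    and F: "valid_pure k A F" "F d = block_strategy d L"
    and T: "Suc k \<le> T"
  shows "c - (2 * L * (1 + \<bar>c\<bar>) + k * \<bar>c\<bar>) / T \<le> (\<Sum>s=1..T. stage_util k u d (pure_play k F s) s) / T"
proof -
  define h where "h = pure_play k F T"
  define \<Phi> where "\<Phi> = potential d c (block_moves_left L) h"
  have hv: "valid_history h" unfolding h_def by (rule valid_history_pure_play[OF F(1)])
  have "(\<Sum>r=Suc k..T. c - u d (action_vec k h r)) \<le> - \<Phi> (Suc k) - - \<Phi> (Suc T) + (\<Sum>r=Suc k..T. 0)"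
    by (rule sum_le_telescope[where P = "\<lambda>r. - \<Phi> r"])
      (use block_strategy_stage_ge[OF d L c F] T in \<open>auto simp: \<Phi>_def h_def\<close>)
  moreover have \<Phi>_bound: "\<bar>\<Phi> r\<bar> \<le> L * (1 + \<bar>c\<bar>)" if "Suc k \<le> r" "r \<le> Suc T" for r
  proof -
    have "\<bar>\<Phi> r\<bar> \<le> real (block_moves_left L r) * (1 + \<bar>c\<bar>)"
      unfolding \<Phi>_def by (rule abs_potential_le[OF hv]) (use that d in \<open>auto simp: h_def\<close>)
    also have "\<dots> \<le> L * (1 + \<bar>c\<bar>)"
      using block_moves_left(2)[OF L(1) that(1)] by (intro mult_right_mono) auto
    finally show ?thesis .
  qed
  moreover have "(\<Sum>r=Suc k..T. c - u d (action_vec k h r))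
      = real (T - k) * c - (\<Sum>r=Suc k..T. u d (action_vec k h r))"
    by (simp add: sum_subtractf)
  moreover have "\<bar>\<Phi> (Suc k)\<bar> \<le> L * (1 + \<bar>c\<bar>)" "\<bar>\<Phi> (Suc T)\<bar> \<le> L * (1 + \<bar>c\<bar>)"
    using T by (auto intro: \<Phi>_bound)
  ultimately have "real (T - k) * c - 2 * L * (1 + \<bar>c\<bar>) \<le> (\<Sum>r=Suc k..T. u d (action_vec k h r))"
    by (simp add: abs_le_iff)
  moreover have "(\<Sum>s=1..T. stage_util k u d (pure_play k F s) s) = (\<Sum>s=1..T. stage_util k u d h s)"
    unfolding h_def by (rule sum.cong[OF refl], rule stage_util_pure_play[symmetric]) auto
  moreover have "\<dots> = (\<Sum>r=Suc k..T. u d (action_vec k h r))"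
    by (rule sum_stage_util) (use T in simp)
  moreover have "real (T - k) * c \<ge> T * c - k * \<bar>c\<bar>"
    using T by (simp add: of_nat_diff algebra_simps abs_ge_self mult_right_mono)
  ultimately have "T * c - (2 * L * (1 + \<bar>c\<bar>) + k * \<bar>c\<bar>) \<le> (\<Sum>s=1..T. stage_util k u d (pure_play k F s) s)"
    by linarith
  then have "(T * c - (2 * L * (1 + \<bar>c\<bar>) + k * \<bar>c\<bar>)) / T \<le> (\<Sum>s=1..T. stage_util k u d (pure_play k F s) s) / T"
    by (rule divide_right_mono) simp
  then show ?thesis using T by (simp add: diff_divide_distrib)
qed

lemma horizon_average_le_nu:
  assumes d: "d < k" and L: "0 < L" "k dvd L"
  shows "ereal ((horizon_value d L default_vec (Suc k mod k) - 2 * k) / L) \<le> nu k A u d"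
proof -
  define c where "c = (horizon_value d L default_vec (Suc k mod k) - 2 * k) / L"
  have "ereal c \<le> game_utility k u (pure_profile (f(d := block_strategy d L))) d"
    if f: "valid_pure k A f" for f
  proof -
    have F: "valid_pure k A (f(d := block_strategy d L))"
      using f block_strategy_in d unfolding valid_pure_def by auto
    show ?thesis unfolding game_utility_pure_profile
      by (rule liminf_ge_if_eventually_ge[of "Suc k"], rule block_strategy_average_ge[OF d L _ F])
        (use L in \<open>auto simp: c_def\<close>)
  qed
  then have "ereal c \<le> (INF f\<in>{f. valid_pure k A f}. game_utility k u (pure_profile (f(d := block_strategy d L))) d)"
    by (auto intro: INF_greatest)
  also have "\<dots> \<le> nu k A u d" unfolding nu_def
    by (rule SUP_upper2[of "block_strategy d L"]) (use block_strategy_in d in auto)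
  finally show ?thesis unfolding c_def .
qed

lemma horizon_value_le_of_nu_le:
  assumes d: "d < k" and L: "0 < L" "k dvd L" and nu: "nu k A u d \<le> ereal x" and a: "valid_vec k A a"
  shows "horizon_value d L a (Suc k mod k) \<le> real L * x + 4 * k"
proof -
  have "(horizon_value d L default_vec (Suc k mod k) - 2 * k) / L \<le> x"
    using horizon_average_le_nu[OF d L] nu by (metis ereal_less_eq(3) order_trans)
  then have "horizon_value d L default_vec (Suc k mod k) - 2 * k \<le> real L * x"
    using L by (simp add: divide_le_eq mult.commute)
  moreover have "horizon_value d L a (Suc k mod k) \<le> horizon_value d L default_vec (Suc k mod k) + 2 * k"
    by (rule horizon_value_le_add[OF a valid_default_vec]) (use d k_pos in auto)
  ultimately show ?thesis by simp
qed

text \<open>The punishers play optimally in games of growing length: game \<open>j\<close> starts in round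
  \<open>block_start j\<close> and lasts \<open>(j + 1) k\<close> moves, so \<open>O(\<surd>T)\<close> games are started up to round \<open>T\<close>.\<close>

primrec block_start :: "nat \<Rightarrow> nat" where
  "block_start 0 = Suc k"
| "block_start (Suc j) = block_start j + k * Suc j"

lemma strict_mono_block_start: "strict_mono block_start"
  by (rule strict_monoI_Suc) (use k_pos in simp)

lemma block_start_mod: "block_start j mod k = Suc k mod k"
  by (induction j) (simp_all add: mod_add_right_eq[symmetric])

lemma sq_le_block_start: "j * j \<le> 2 * block_start j"
proof (induction j)
  case (Suc j)
  have "1 * Suc j \<le> k * Suc j" by (rule mult_le_mono1) (use k_pos in simp)
  then show ?case using Suc by simp
qed simp

lemma less_block_start_Suc: "r < block_start (Suc r)"
  using sq_le_block_start[of "Suc r"] by simp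

definition block_index :: "nat \<Rightarrow> nat" where
  "block_index r = (LEAST j. r < block_start (Suc j))"

lemma less_block_start_Suc_block_index: "r < block_start (Suc (block_index r))"
  unfolding block_index_def by (rule LeastI[of _ r]) (rule less_block_start_Suc)

lemma block_index_eqI:
  assumes "block_start j \<le> r" "r < block_start (Suc j)"
  shows "block_index r = j"
  unfolding block_index_def
proof (rule Least_equality)
  fix y assume "r < block_start (Suc y)"
  then have "block_start j < block_start (Suc y)" using assms(1) by simp
  then show "j \<le> y"
    using strict_mono_less[OF strict_mono_block_start, of j "Suc y"] by (simp del: block_start.simps)
qed fact

lemma block_index_mono: "r \<le> r' \<Longrightarrow> block_index r \<le> block_index r'"
  unfolding block_index_def
  by (rule Least_le) (use less_block_start_Suc_block_index[of r'] in \<open>simp add: block_index_def\<close>)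

lemma block_start_block_index_le:
  assumes "Suc k \<le> r"
  shows "block_start (block_index r) \<le> r"
proof (cases "block_index r")
  case (Suc j)
  have "\<not> r < block_start (Suc j)"
    using Suc Least_le[of "\<lambda>j. r < block_start (Suc j)" j] by (auto simp: block_index_def)
  then show ?thesis using Suc by simp
qed (use assms in simp)

lemma block_index_sq_le: "Suc k \<le> r \<Longrightarrow> block_index r * block_index r \<le> 2 * r"
  using sq_le_block_start[of "block_index r"] block_start_block_index_le by fastforce

definition punish_moves_left :: "nat \<Rightarrow> nat" where
  "punish_moves_left r = block_start (Suc (block_index r)) - r"

lemma punish_moves_left:
  assumes r: "Suc k \<le> r"
  shows "1 \<le> punish_moves_left r" "punish_moves_left r \<le> k * Suc (block_index r)"
    and "1 < punish_moves_left r \<Longrightarrow>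
      block_index (Suc r) = block_index r \<and> punish_moves_left (Suc r) = punish_moves_left r - 1"
    and "punish_moves_left r = 1 \<Longrightarrow> block_index (Suc r) = Suc (block_index r) \<and>
      punish_moves_left (Suc r) = Suc (Suc (block_index r)) * k \<and> Suc r mod k = Suc k mod k"
proof -
  note b = block_start_block_index_le[OF r] less_block_start_Suc_block_index[of r]
  show "1 \<le> punish_moves_left r" "punish_moves_left r \<le> k * Suc (block_index r)"
    unfolding punish_moves_left_def using b by auto
  show "block_index (Suc r) = block_index r \<and> punish_moves_left (Suc r) = punish_moves_left r - 1"
    if "1 < punish_moves_left r"
  proof -
    have "block_index (Suc r) = block_index r"
      using b that by (intro block_index_eqI) (auto simp: punish_moves_left_def)
    then show ?thesis unfolding punish_moves_left_def by simp
  qed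
  show "block_index (Suc r) = Suc (block_index r) \<and>
      punish_moves_left (Suc r) = Suc (Suc (block_index r)) * k \<and> Suc r mod k = Suc k mod k"
    if "punish_moves_left r = 1"
  proof -
    have e: "Suc r = block_start (Suc (block_index r))"
      using that b unfolding punish_moves_left_def by simp
    have "block_index (Suc r) = Suc (block_index r)"
      using e strict_mono_less[OF strict_mono_block_start, of "Suc (block_index r)" "Suc (Suc (block_index r))"]
      by (intro block_index_eqI) auto
    moreover have "Suc r mod k = Suc k mod k"
      using block_start_mod[of "Suc (block_index r)"] unfolding e .
    ultimately show ?thesis unfolding punish_moves_left_def using e by (simp add: mult.commute)
  qed
qed


lemma tendsto_block_index_div: "(\<lambda>T. real (block_index (Suc T)) / real T) \<longlonglongrightarrow> 0"
proof (rule Lim_null_comparison)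
  show "\<forall>\<^sub>F T in sequentially. norm (real (block_index (Suc T)) / real T) \<le> 2 * inverse (sqrt (real T))"
  proof (rule eventually_sequentiallyI[of "Suc k"])
    fix T assume T: "Suc k \<le> T"
    have "real (block_index (Suc T)) ^ 2 \<le> (2 * sqrt (real T)) ^ 2"
      using block_index_sq_le[of "Suc T"] T
      by (simp add: power2_eq_square power_mult_distrib flip: of_nat_mult)
    then have "real (block_index (Suc T)) \<le> 2 * sqrt (real T)"
      by (rule power2_le_imp_le) simp
    then have "real (block_index (Suc T)) / real T \<le> 2 * (sqrt (real T) / real T)"
      using divide_right_mono[of _ _ "real T"] by fastforce
    then show "norm (real (block_index (Suc T)) / real T) \<le> 2 * inverse (sqrt (real T))"
      by (simp add: sqrt_divide_self_eq)
  qed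
  show "(\<lambda>T. 2 * inverse (sqrt (real T))) \<longlonglongrightarrow> 0"
    using tendsto_mult_right_zero[OF tendsto_inverse_0_at_top[OF filterlim_compose[OF sqrt_at_top filterlim_real_sequentially]], of 2]
    by simp
qed

end

section \<open>Following a path, and punishing the first deviator\<close>

locale path_game = alternating_game k A u
  for k :: nat and A :: "nat \<Rightarrow> 'a set" and u :: "nat \<Rightarrow> 'a list \<Rightarrow> real" +
  fixes p :: "nat \<Rightarrow> 'a list \<times> nat" and t :: "nat \<Rightarrow> real"
  assumes path: "is_inf_path k A p"
    and mean_payoff_path: "\<And>i. i < k \<Longrightarrow> mean_payoff u p i = ereal (t i)"
    and nu_le: "\<And>i. i < k \<Longrightarrow> nu k A u i \<le> ereal (t i)"
begin

lemma path_vertex: "valid_vec k A (fst (p n))" "snd (p n) < k"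
  using path unfolding is_inf_path_def is_vertex_def by auto

lemma path_edge:
  "snd (p (Suc n)) = Suc (snd (p n)) mod k"
  "l < k \<Longrightarrow> l \<noteq> snd (p n) \<Longrightarrow> fst (p (Suc n)) ! l = fst (p n) ! l"
  using path unfolding is_inf_path_def is_edge_def by auto

lemma snd_path: "snd (p n) = (snd (p 0) + n) mod k"
  by (induction n) (use path_vertex(2)[of 0] path_edge(1) in \<open>auto simp: mod_Suc_eq\<close>)

text \<open>The shift makes step \<open>n\<close> owned by the mover of round \<open>k + n + 1\<close>, so that
  \<open>fst (shifted_path (s - k))\<close> is the action vector of round \<open>s\<close> of the play following the path.\<close>

definition shifted_path :: "nat \<Rightarrow> 'a list \<times> nat" where
  "shifted_path n = p (Suc k - snd (p 0) + n)"

lemma snd_shifted_path: "snd (shifted_path n) = (Suc k + n) mod k"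
proof -
  have "snd (p 0) + (Suc k - snd (p 0) + n) = Suc k + n" using path_vertex(2)[of 0] by simp
  then show ?thesis unfolding shifted_path_def using snd_path[of "Suc k - snd (p 0) + n"] by simp
qed

lemma valid_vec_shifted_path: "valid_vec k A (fst (shifted_path n))"
  unfolding shifted_path_def by (rule path_vertex)

lemma fst_shifted_path_Suc: "fst (shifted_path (Suc n)) = (fst (shifted_path n))[snd (shifted_path n) := fst (shifted_path (Suc n)) ! snd (shifted_path n)]"
proof (rule nth_equalityI)
  fix l assume "l < length (fst (shifted_path (Suc n)))"
  then have "l < k" using valid_vec_shifted_path[of "Suc n"] by (simp add: valid_vec_def)
  then show "fst (shifted_path (Suc n)) ! l = (fst (shifted_path n))[snd (shifted_path n) := fst (shifted_path (Suc n)) ! snd (shifted_path n)] ! l"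
    using path_edge(2)[of l "Suc k - snd (p 0) + n"] valid_vec_shifted_path[of n]
    by (cases "l = snd (shifted_path n)") (auto simp: shifted_path_def valid_vec_def)
qed (use valid_vec_shifted_path in \<open>simp add: valid_vec_def\<close>)

definition path_action :: "nat \<Rightarrow> 'a" where
  "path_action r = fst (shifted_path (r - k)) ! (r mod k)"

lemma path_action_in: "path_action r \<in> A (r mod k)"
  using valid_vec_shifted_path[of "r - k"] k_pos unfolding path_action_def valid_vec_def by simp

definition path_history :: "nat \<Rightarrow> 'a list" where
  "path_history n = map (\<lambda>j. path_action (Suc j)) [0..<n]"

lemma length_path_history [simp]: "length (path_history n) = n"
  by (simp add: path_history_def)

lemma nth_path_history: "j < n \<Longrightarrow> path_history n ! j = path_action (Suc j)"
  by (simp add: path_history_def)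

lemma action_vec_path_history:
  assumes "k \<le> s" "s \<le> n"
  shows "action_vec k (path_history n) s = fst (shifted_path (s - k))"
  using assms
proof (induction s rule: dec_induct)
  case base
  show ?case
  proof (rule nth_equalityI)
    fix l assume "l < length (action_vec k (path_history n) k)"
    then have l: "l < k" by simp
    note idx = last_move_index[OF k_pos le_refl l]
    have "action_vec k (path_history n) k ! l = path_action (Suc (k - (k - l) mod k - 1))"
      using idx(1) base by (simp add: nth_action_vec[OF l] nth_path_history)
    then show "action_vec k (path_history n) k ! l = fst (shifted_path (k - k)) ! l"
      unfolding path_action_def using idx by simp
  qed (use valid_vec_shifted_path[of 0] in \<open>simp add: valid_vec_def\<close>)
next
  case (step m)
  then have "m < n" by simp
  then have "action_vec k (path_history n) (Suc m) = (fst (shifted_path (m - k)))[Suc m mod k := path_action (Suc m)]"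
    using action_vec_Suc[OF k_pos step.hyps(1), of "path_history n"] step.IH nth_path_history[of m n]
    by simp
  also have "Suc m mod k = snd (shifted_path (m - k))" using snd_shifted_path[of "m - k"] step.hyps(1) by simp
  also have "path_action (Suc m) = fst (shifted_path (Suc (m - k))) ! snd (shifted_path (m - k))"
    using step.hyps(1) snd_shifted_path[of "m - k"] by (simp add: path_action_def Suc_diff_le)
  finally show ?case using fst_shifted_path_Suc[of "m - k"] step.hyps(1) by (simp add: Suc_diff_le)
qed

definition on_path :: "'a list \<Rightarrow> bool" where
  "on_path h \<longleftrightarrow> (\<forall>j<length h. h ! j = path_action (Suc j))"

definition first_deviation :: "'a list \<Rightarrow> nat" where
  "first_deviation h = (LEAST j. j < length h \<and> h ! j \<noteq> path_action (Suc j))"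

lemma on_path_path_history: "on_path (path_history n)"
  by (simp add: on_path_def nth_path_history)

definition punishment :: "nat \<Rightarrow> nat \<Rightarrow> 'a list \<Rightarrow> 'a" where
  "punishment d j h = (if length h < k then (SOME b. b \<in> A j)
      else optimal_move d (punish_moves_left (Suc (length h)) - 1) (action_vec k h (length h)) j)"

text \<open>Only the mover's choice is ever recorded. Off the path, everybody punishes the player who
  moved at the first deviation.\<close>

definition trigger :: "nat \<Rightarrow> 'a list \<Rightarrow> 'a" where
  "trigger j h = (if on_path h then (if Suc (length h) mod k = j then path_action (Suc (length h)) else (SOME b. b \<in> A j))
     else punishment (Suc (first_deviation h) mod k) j h)"

lemma valid_pure_trigger: "valid_pure k A trigger"
  unfolding valid_pure_def trigger_def punishment_def
  using path_action_in optimal_move_in A_nonempty by (auto simp: some_in_eq)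

lemma pure_play_trigger: "pure_play k trigger n = path_history n"
proof (induction n)
  case (Suc n)
  have "trigger (mover k (Suc n)) (path_history n) = path_action (Suc n)"
    using on_path_path_history[of n] unfolding trigger_def by (simp add: mover_def)
  then show ?case using Suc by (simp add: path_history_def)
qed (simp add: path_history_def)

definition path_stage :: "nat \<Rightarrow> nat \<Rightarrow> real" where
  "path_stage i s = stage_util k u i (path_history s) s"

lemma abs_path_stage_le: "i < k \<Longrightarrow> \<bar>path_stage i s\<bar> \<le> 1"
  unfolding path_stage_def using abs_stage_util_pure_play_le[OF valid_pure_trigger, of i s] pure_play_trigger
  by simp

lemma liminf_average_path_stage:
  assumes i: "i < k"
  shows "liminf (\<lambda>T. ereal ((\<Sum>s=1..T. path_stage i s) / real T)) = ereal (t i)"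
proof -
  define b where "b s = u i (fst (p s))" for s
  have "path_stage i (s + k) = b (s + (Suc k - snd (p 0)))" if "0 < s" for s
    using that action_vec_path_history[of "s + k" "s + k"]
    unfolding path_stage_def stage_util_def b_def shifted_path_def by (simp add: add.commute)
  then have "liminf (\<lambda>T. ereal ((\<Sum>s=1..T. path_stage i s) / real T))
      = liminf (\<lambda>T. ereal ((\<Sum>s=1..T. b (s + (Suc k - snd (p 0)))) / real T))"
    using liminf_average_shift[of "path_stage i", OF abs_path_stage_le[OF i], symmetric, of k] by simp
  also have "\<dots> = liminf (\<lambda>T. ereal ((\<Sum>s=1..T. b s) / real T))"
    by (rule liminf_average_shift) (use u_bounded[OF i path_vertex(1)] in \<open>simp add: b_def\<close>)
  also have "\<dots> = ereal (t i)" using mean_payoff_path[OF i] unfolding mean_payoff_def b_def by simp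
  finally show ?thesis .
qed

lemma game_utility_trigger: "i < k \<Longrightarrow> game_utility k u (pure_profile trigger) i = ereal (t i)"
  using liminf_average_path_stage
  unfolding game_utility_pure_profile pure_play_trigger path_stage_def by simp

lemma abs_target_le:
  assumes i: "i < k"
  shows "\<bar>t i\<bar> \<le> 1"
proof -
  have avg: "\<bar>(\<Sum>s=1..T. path_stage i s) / real T\<bar> \<le> 1" for T
  proof -
    have "\<bar>\<Sum>s=1..T. path_stage i s\<bar> \<le> (\<Sum>s=1..T. 1)"
      by (rule order_trans[OF sum_abs sum_mono]) (use abs_path_stage_le[OF i] in auto)
    then show ?thesis by (cases "T = 0") (simp_all add: abs_divide)
  qed
  have "ereal (-1) \<le> ereal ((\<Sum>s=1..T. path_stage i s) / real T)"
    and "ereal ((\<Sum>s=1..T. path_stage i s) / real T) \<le> ereal 1" for T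
    using avg[of T] unfolding abs_le_iff ereal_less_eq(3) by linarith+
  then have "ereal (-1) \<le> ereal (t i)" "ereal (t i) \<le> ereal 1"
    unfolding liminf_average_path_stage[OF i, symmetric]
    by (auto intro!: Liminf_bounded Liminf_le always_eventually)
  then show ?thesis by simp
qed

definition deviation :: "nat \<Rightarrow> ('a list \<Rightarrow> 'a pmf) \<Rightarrow> nat \<Rightarrow> 'a list \<Rightarrow> 'a pmf" where
  "deviation i \<tau> = (pure_profile trigger)(i := \<tau>)"

definition consistent :: "nat \<Rightarrow> nat \<Rightarrow> 'a list \<Rightarrow> bool" where
  "consistent i n h \<longleftrightarrow> length h = n \<and> valid_history h \<and>
     (\<forall>j<n. Suc j mod k \<noteq> i \<longrightarrow> h ! j = trigger (Suc j mod k) (take j h))"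

lemma consistent_hist_dist:
  assumes i: "i < k" and \<tau>: "valid_strat A i \<tau>"
  shows "h \<in> set_pmf (hist_dist k (deviation i \<tau>) n) \<Longrightarrow> consistent i n h"
proof (induction n arbitrary: h)
  case (Suc n)
  from Suc.prems obtain h0 a where h: "h = h0 @ [a]" and h0: "h0 \<in> set_pmf (hist_dist k (deviation i \<tau>) n)"
    and a: "a \<in> set_pmf (deviation i \<tau> (Suc n mod k) h0)" by (auto simp: mover_def)
  have c0: "consistent i n h0" by (rule Suc.IH[OF h0])
  have other: "a = trigger (Suc n mod k) h0" if "Suc n mod k \<noteq> i"
    using a that unfolding deviation_def pure_profile_def by auto
  have "a \<in> A (Suc n mod k)"
  proof (cases "Suc n mod k = i")
    case True then show ?thesis using a \<tau> unfolding deviation_def valid_strat_def by auto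
  next
    case False then show ?thesis using other valid_pure_trigger k_pos unfolding valid_pure_def by simp
  qed
  then show ?case using c0 other unfolding consistent_def valid_history_def h
    by (auto simp: nth_append less_Suc_eq)
qed (simp add: consistent_def valid_history_def)

lemma finite_set_pmf_hist_dist_deviation:
  assumes i: "i < k" and \<tau>: "valid_strat A i \<tau>"
  shows "finite (set_pmf (hist_dist k (deviation i \<tau>) n))"
proof (rule finite_subset)
  let ?U = "\<Union>l<k. A l"
  show "set_pmf (hist_dist k (deviation i \<tau>) n) \<subseteq> {xs. set xs \<subseteq> ?U \<and> length xs = n}"
  proof
    fix h assume "h \<in> set_pmf (hist_dist k (deviation i \<tau>) n)"
    then have c: "consistent i n h" by (rule consistent_hist_dist[OF i \<tau>])
    then have "set h \<subseteq> ?U" using k_pos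
      unfolding consistent_def valid_history_def by (force simp: in_set_conv_nth)
    then show "h \<in> {xs. set xs \<subseteq> ?U \<and> length xs = n}" using c by (simp add: consistent_def)
  qed
  show "finite {xs. set xs \<subseteq> ?U \<and> length xs = n}"
    using finite_A by (intro finite_lists_length_eq) auto
qed

lemma first_deviation:
  assumes "\<not> on_path h"
  shows first_deviation_less: "first_deviation h < length h"
    and nth_first_deviation: "h ! first_deviation h \<noteq> path_action (Suc (first_deviation h))"
    and nth_before_first_deviation: "j < first_deviation h \<Longrightarrow> h ! j = path_action (Suc j)"
proof -
  have ex: "\<exists>j. j < length h \<and> h ! j \<noteq> path_action (Suc j)" using assms unfolding on_path_def by auto
  show "first_deviation h < length h" "h ! first_deviation h \<noteq> path_action (Suc (first_deviation h))"
    using LeastI_ex[OF ex] unfolding first_deviation_def by auto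
  show "h ! j = path_action (Suc j)" if "j < first_deviation h"
    using that \<open>first_deviation h < length h\<close> not_less_Least[of j] unfolding first_deviation_def by force
qed

lemma on_path_take: "on_path h \<Longrightarrow> on_path (take m h)"
  unfolding on_path_def by simp

lemma on_path_take_iff:
  assumes "\<not> on_path h" "m \<le> length h"
  shows "on_path (take m h) \<longleftrightarrow> m \<le> first_deviation h"
proof
  assume on: "on_path (take m h)"
  show "m \<le> first_deviation h"
  proof (rule ccontr)
    assume "\<not> m \<le> first_deviation h"
    then have "take m h ! first_deviation h = path_action (Suc (first_deviation h))"
      using on assms(2) unfolding on_path_def by simp
    then show False using nth_first_deviation[OF assms(1)] \<open>\<not> m \<le> first_deviation h\<close> by simp
  qed
qed (use nth_before_first_deviation[OF assms(1)] in \<open>auto simp: on_path_def\<close>)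

lemma first_deviation_take:
  assumes "\<not> on_path h" "first_deviation h < m"
  shows "first_deviation (take m h) = first_deviation h"
  unfolding first_deviation_def[of "take m h"]
proof (rule Least_equality)
  show "first_deviation h < length (take m h) \<and>
      take m h ! first_deviation h \<noteq> path_action (Suc (first_deviation h))"
    using first_deviation(1,2)[OF assms(1)] assms(2) by simp
  fix y assume "y < length (take m h) \<and> take m h ! y \<noteq> path_action (Suc y)"
  then have "\<not> y < first_deviation h" using nth_before_first_deviation[OF assms(1), of y] by auto
  then show "first_deviation h \<le> y" by simp
qed

lemma take_eq_path_history:
  assumes "\<And>j. j < s \<Longrightarrow> h ! j = path_action (Suc j)" "s \<le> length h"
  shows "take s h = path_history s"
  by (rule nth_equalityI) (use assms in \<open>auto simp: nth_path_history\<close>)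

text \<open>Only the deviating player \<open>i\<close> leaves the path, since every other player follows \<open>trigger\<close>,
  which stays on the path as long as no one has left it.\<close>

lemma mover_first_deviation:
  assumes c: "consistent i T h" and h: "\<not> on_path h"
  shows "Suc (first_deviation h) mod k = i"
proof (rule ccontr)
  assume ne: "Suc (first_deviation h) mod k \<noteq> i"
  have "take (first_deviation h) h = path_history (first_deviation h)"
    by (rule take_eq_path_history) (use first_deviation[OF h] in auto)
  then have "h ! first_deviation h = path_action (Suc (first_deviation h))"
    using c ne first_deviation_less[OF h] on_path_path_history
    unfolding consistent_def trigger_def by auto
  then show False using nth_first_deviation[OF h] by simp
qed

lemma stage_util_before_deviation:
  assumes c: "consistent i T h" and s: "0 < s" "s \<le> T" and before: "on_path h \<or> s \<le> first_deviation h"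
  shows "stage_util k u i h s = path_stage i s"
proof -
  have len: "length h = T" using c by (simp add: consistent_def)
  have "h ! j = path_action (Suc j)" if "j < s" for j
  proof (cases "on_path h")
    case True then show ?thesis using that s len unfolding on_path_def by simp
  next
    case False then show ?thesis using that before nth_before_first_deviation by auto
  qed
  then have "take s h = path_history s" using s len by (intro take_eq_path_history) auto
  then have "take s h = take s (path_history s)" by simp
  then show ?thesis unfolding path_stage_def by (rule stage_util_take[OF s(1)])
qed

lemma punishment_move:
  assumes c: "consistent i T h" and h: "\<not> on_path h"
    and r: "first_deviation h + 2 \<le> r" "Suc k \<le> r" "r \<le> T" "r mod k \<noteq> i"
  shows "h ! (r - 1) = optimal_move i (punish_moves_left r - 1) (action_vec k h (r - 1)) (r mod k)"
proof -
  have j: "r - 1 < T" "Suc (r - 1) = r" using r by auto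
  have "\<forall>j<T. Suc j mod k \<noteq> i \<longrightarrow> h ! j = trigger (Suc j mod k) (take j h)"
    using c by (simp add: consistent_def)
  then have "h ! (r - 1) = trigger (r mod k) (take (r - 1) h)"
    using j r(4) by (metis)
  also have "\<dots> = punishment i (r mod k) (take (r - 1) h)"
  proof -
    have "\<not> on_path (take (r - 1) h)"
      using on_path_take_iff[OF h, of "r - 1"] r c by (simp add: consistent_def)
    moreover have "first_deviation (take (r - 1) h) = first_deviation h"
      using first_deviation_take[OF h, of "r - 1"] r by simp
    ultimately show ?thesis using mover_first_deviation[OF c h] unfolding trigger_def by simp
  qed
  also have "\<dots> = optimal_move i (punish_moves_left r - 1) (action_vec k h (r - 1)) (r mod k)"
  proof -
    have "\<not> r - 1 < k" "length (take (r - 1) h) = r - 1" "Suc (r - 1) = r"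
      using r c by (auto simp: consistent_def)
    then show ?thesis using action_vec_take[of "r - 1" "r - 1" k h] k_pos unfolding punishment_def by simp
  qed
  finally show ?thesis .
qed

text \<open>The \<open>4 k\<close> charged per started game pays for the excess \<open>horizon_value_le_of_nu_le\<close> allows
  each new game over its \<open>\<nu>\<close>-share.\<close>

definition punish_potential :: "nat \<Rightarrow> 'a list \<Rightarrow> nat \<Rightarrow> real" where
  "punish_potential i h r = potential i (t i) punish_moves_left h r - 4 * k * real (block_index r)"

lemma punished_stage_le:
  assumes i: "i < k" and c: "consistent i T h" and h: "\<not> on_path h"
    and r: "first_deviation h + 2 \<le> r" "Suc k \<le> r" "r \<le> T"
  shows "u i (action_vec k h r) - t i \<le> punish_potential i h r - punish_potential i h (Suc r)"
proof -
  have hv: "valid_history h" and rh: "r \<le> length h" using c r by (auto simp: consistent_def)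
  have drop: "u i (action_vec k h r) - t i \<le> potential i (t i) punish_moves_left h r
      - potential i (t i) punish_moves_left h (Suc r)
      + (if punish_moves_left r = 1 then potential i (t i) punish_moves_left h (Suc r) else 0)"
    by (rule stage_payoff_le_potential_drop[where \<rho> = punish_moves_left, OF hv r(2) rh punish_moves_left(1)[OF r(2)]])
      (use punish_moves_left(3)[OF r(2)] punishment_move[OF c h r] in auto)
  show ?thesis
  proof (cases "punish_moves_left r = 1")
    case True
    note next_game = punish_moves_left(4)[OF r(2) True]
    have "horizon_value i (Suc (Suc (block_index r)) * k) (action_vec k h r) (Suc k mod k)
        \<le> real (Suc (Suc (block_index r)) * k) * t i + 4 * k"
      by (rule horizon_value_le_of_nu_le[OF i _ _ nu_le[OF i] valid_history_action_vec[OF hv _ rh]])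
        (use k_pos r in auto)
    then have "potential i (t i) punish_moves_left h (Suc r) \<le> 4 * k"
      using next_game unfolding potential_def by simp
    then show ?thesis using drop True next_game unfolding punish_potential_def by (simp add: algebra_simps)
  next
    case False
    then show ?thesis using drop punish_moves_left(1,3)[OF r(2)] unfolding punish_potential_def by simp
  qed
qed

lemma abs_punish_potential_le:
  assumes i: "i < k" and h: "valid_history h" "length h = T" and r: "Suc k \<le> r" "r \<le> Suc T"
  shows "\<bar>punish_potential i h r\<bar> \<le> 6 * k * (block_index (Suc T) + 1)"
proof -
  have "\<bar>potential i (t i) punish_moves_left h r\<bar> \<le> real (punish_moves_left r) * (1 + \<bar>t i\<bar>)"
    by (rule abs_potential_le) (use h r i in auto)
  also have "\<dots> \<le> real (k * Suc (block_index r)) * 2"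
  proof (rule mult_mono)
    show "real (punish_moves_left r) \<le> real (k * Suc (block_index r))"
      using punish_moves_left(2)[OF r(1)] by (simp only: of_nat_le_iff)
  qed (use abs_target_le[OF i] in auto)
  finally have "\<bar>potential i (t i) punish_moves_left h r\<bar> \<le> 2 * k + 2 * (real k * block_index r)"
    by (simp add: algebra_simps)
  moreover have "real k * block_index r \<le> real k * block_index (Suc T)"
    using block_index_mono[OF r(2)] by (intro mult_left_mono) auto
  moreover have "punish_potential i h r = potential i (t i) punish_moves_left h r - 4 * (real k * block_index r)"
    unfolding punish_potential_def by simp
  moreover have "6 * k * (block_index (Suc T) + 1) = 6 * k + 6 * (real k * block_index (Suc T))"
    by (simp add: algebra_simps)
  moreover have "0 \<le> real k * block_index r" by simp
  ultimately show ?thesis unfolding abs_le_iff by linarith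
qed

definition punish_slack :: "nat \<Rightarrow> real" where
  "punish_slack T = 2 * (k + 1) + 12 * k * (block_index (Suc T) + 1)"

text \<open>Rounds before the punishment starts and before round \<open>k + 1\<close> are bounded crudely; from then
  on the punishment potential telescopes.\<close>

lemma sum_stage_after_deviation_le:
  assumes i: "i < k" and c: "consistent i T h" and h: "\<not> on_path h"
  defines "D \<equiv> first_deviation h"
  shows "(\<Sum>r=Suc D..T. stage_util k u i h r) \<le> real (T - D) * t i + punish_slack T"
proof -
  have len: "length h = T" and hv: "valid_history h" using c by (auto simp: consistent_def)
  have DT: "D < T" using first_deviation_less[OF h] len unfolding D_def by simp
  define r0 where "r0 = max (D + 2) (Suc k)"
  define Q where "Q = punish_potential i h"
  define e :: "nat \<Rightarrow> real" where "e r = (if r < r0 then 2 else 0)" for r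
  have step: "stage_util k u i h r - t i \<le> Q (max r r0) - Q (max (Suc r) r0) + e r"
    if r: "Suc D \<le> r" "r \<le> T" for r
  proof (cases "r < r0")
    case True
    then have "max r r0 = r0" "max (Suc r) r0 = r0" by auto
    then show ?thesis
      using True abs_stage_util_le[OF hv _ i, of r] abs_target_le[OF i] r len
      unfolding e_def by (simp add: abs_le_iff)
  next
    case False
    then have "Suc k \<le> r" "D + 2 \<le> r" unfolding r0_def by auto
    then show ?thesis using punished_stage_le[OF i c h _ _ r(2)] False
      unfolding e_def Q_def D_def stage_util_def by simp
  qed
  have "(\<Sum>r=Suc D..T. stage_util k u i h r - t i)
      \<le> Q (max (Suc D) r0) - Q (max (Suc T) r0) + (\<Sum>r=Suc D..T. e r)"
    by (rule sum_le_telescope[where P = "\<lambda>r. Q (max r r0)"]) (use step DT in auto)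
  moreover have "Q (max (Suc D) r0) - Q (max (Suc T) r0) \<le> 12 * k * (block_index (Suc T) + 1)"
  proof (cases "r0 \<le> Suc T")
    case True
    then have "\<bar>Q r0\<bar> \<le> 6 * k * (block_index (Suc T) + 1)" "\<bar>Q (Suc T)\<bar> \<le> 6 * k * (block_index (Suc T) + 1)"
      unfolding Q_def using abs_punish_potential_le[OF i hv len] r0_def by auto
    moreover have "max (Suc D) r0 = r0" "max (Suc T) r0 = Suc T" using True unfolding r0_def by auto
    ultimately show ?thesis by (simp add: abs_le_iff)
  next
    case False
    then have "max (Suc D) r0 = r0" "max (Suc T) r0 = r0" unfolding r0_def by auto
    then show ?thesis by simp
  qed
  moreover have "(\<Sum>r=Suc D..T. e r) \<le> 2 * (k + 1)"
  proof -
    have "(\<Sum>r=Suc D..T. e r) = 2 * card {r\<in>{Suc D..T}. r < r0}"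
      unfolding e_def by (simp add: sum.If_cases Int_def)
    also have "card {r\<in>{Suc D..T}. r < r0} \<le> card {Suc D..<r0}" by (rule card_mono) auto
    also have "card {Suc D..<r0} \<le> k + 1" unfolding r0_def by simp
    finally show ?thesis by simp
  qed
  ultimately show ?thesis
    using DT unfolding punish_slack_def by (simp add: sum_subtractf of_nat_diff algebra_simps)
qed

lemma tendsto_punish_slack_div: "(\<lambda>T. (2 + punish_slack T) / real T) \<longlonglongrightarrow> 0"
proof -
  have "(2 + punish_slack T) / real T
      = (4 + 14 * real k) / real T + 12 * real k * (real (block_index (Suc T)) / real T)" for T
    unfolding punish_slack_def by (simp add: algebra_simps add_divide_distrib)
  moreover have "(\<lambda>T. (4 + 14 * real k) / real T + 12 * real k * (real (block_index (Suc T)) / real T))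
      \<longlonglongrightarrow> 0 + 12 * real k * 0"
    by (intro tendsto_add tendsto_mult tendsto_const lim_const_over_n tendsto_block_index_div)
  ultimately show ?thesis by simp
qed

definition path_excess :: "nat \<Rightarrow> nat \<Rightarrow> real" where
  "path_excess i n = (\<Sum>s=1..n. path_stage i s) - real n * t i"

lemma path_excess_le:
  assumes i: "i < k"
  shows "path_excess i n \<le> 2 * real n"
proof -
  have "(\<Sum>s=1..n. path_stage i s) \<le> (\<Sum>s=1..n. 1)"
    by (rule sum_mono) (use abs_path_stage_le[OF i] in \<open>simp add: abs_le_iff\<close>)
  moreover have "- (real n * t i) \<le> real n"
    using abs_target_le[OF i] mult_left_mono[of "- t i" 1 "real n"] by (simp add: abs_le_iff)
  ultimately show ?thesis unfolding path_excess_def by simp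
qed

lemma liminf_path_excess_le:
  assumes i: "i < k"
  shows "liminf (\<lambda>T. ereal (path_excess i T / real T)) \<le> 0"
proof -
  have "liminf (\<lambda>T. ereal (path_excess i T / real T))
      = liminf (\<lambda>T. ereal (- t i) + ereal ((\<Sum>s=1..T. path_stage i s) / real T))"
    by (rule Liminf_eq, rule eventually_sequentiallyI[of 1]) (simp add: path_excess_def field_simps)
  also have "\<dots> = ereal (- t i) + liminf (\<lambda>T. ereal ((\<Sum>s=1..T. path_stage i s) / real T))"
    by (rule ereal_liminf_lim_add) auto
  also have "\<dots> = 0" using liminf_average_path_stage[OF i] by simp
  finally show ?thesis by simp
qed

lemma path_excess_first_deviation_le:
  assumes i: "i < k" and c: "consistent i T h" and h: "\<not> on_path h" and N: "0 < N"
  shows "path_excess i (first_deviation h)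
    \<le> 2 * real T / real N + 2 * real T * indicator {h. on_path (take (T div N) h) \<and> \<not> on_path h} h"
proof -
  define D where "D = first_deviation h"
  have len: "length h = T" using c by (simp add: consistent_def)
  have DT: "D < T" using first_deviation_less[OF h] len unfolding D_def by simp
  show ?thesis
  proof (cases "on_path (take (T div N) h)")
    case True
    then have "indicator {h. on_path (take (T div N) h) \<and> \<not> on_path h} h = (1::real)" using h by simp
    moreover have "path_excess i D \<le> 2 * real T" using path_excess_le[OF i, of D] DT by simp
    moreover have "0 \<le> 2 * real T / real N" by simp
    ultimately show ?thesis unfolding D_def by (simp only: mult_1_right)
  next
    case False
    then have "D < T div N" using on_path_take_iff[OF h, of "T div N"] len unfolding D_def by simp
    then have "real D \<le> real (T div N)" by simp
    also have "\<dots> \<le> real T / real N" by (rule of_nat_div_le_of_nat)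
    finally have "real D \<le> real T / real N" .
    moreover have "2 * real T / real N = 2 * (real T / real N)" by simp
    moreover have "0 \<le> 2 * real T * indicator {h. on_path (take (T div N) h) \<and> \<not> on_path h} h" by simp
    ultimately show ?thesis using path_excess_le[OF i, of D] unfolding D_def by linarith
  qed
qed

lemma sum_stage_le:
  assumes i: "i < k" and c: "consistent i T h" and N: "0 < N"
  shows "(\<Sum>r=1..T. stage_util k u i h r) \<le> real T * t i + 2 * real T / real N
     + 2 * real T * indicator {h. on_path (take (T div N) h) \<and> \<not> on_path h} h
     + max (path_excess i T) 0 + punish_slack T"
proof (cases "on_path h")
  case True
  then have "(\<Sum>r=1..T. stage_util k u i h r) = (\<Sum>r=1..T. path_stage i r)"
    using stage_util_before_deviation[OF c] by (intro sum.cong) auto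
  moreover have "(\<Sum>r=1..T. path_stage i r) - real T * t i \<le> max (path_excess i T) 0"
    unfolding path_excess_def by simp
  moreover have "0 \<le> punish_slack T" "0 \<le> 2 * real T / real N"
    "0 \<le> 2 * real T * indicator {h. on_path (take (T div N) h) \<and> \<not> on_path h} h"
    by (simp_all add: punish_slack_def)
  ultimately show ?thesis by linarith
next
  case False
  define D where "D = first_deviation h"
  have DT: "D < T" using first_deviation_less[OF False] c unfolding D_def consistent_def by simp
  have "(\<Sum>r=1..T. stage_util k u i h r) = (\<Sum>r=1..D. stage_util k u i h r) + (\<Sum>r=Suc D..T. stage_util k u i h r)"
    using DT by (subst sum.union_disjoint[symmetric]) (auto intro: sum.cong)
  also have "(\<Sum>r=1..D. stage_util k u i h r) = (\<Sum>r=1..D. path_stage i r)"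
    using stage_util_before_deviation[OF c] DT unfolding D_def by (intro sum.cong) auto
  also have "(\<Sum>r=Suc D..T. stage_util k u i h r) \<le> real (T - D) * t i + punish_slack T"
    using sum_stage_after_deviation_le[OF i c False] unfolding D_def .
  finally have "(\<Sum>r=1..T. stage_util k u i h r) \<le> real T * t i + path_excess i D + punish_slack T"
    unfolding path_excess_def using DT by (simp add: of_nat_diff algebra_simps)
  then show ?thesis using path_excess_first_deviation_le[OF i c False N] unfolding D_def by simp
qed

definition prob_on_path :: "nat \<Rightarrow> ('a list \<Rightarrow> 'a pmf) \<Rightarrow> nat \<Rightarrow> real" where
  "prob_on_path i \<tau> n = measure_pmf.prob (hist_dist k (deviation i \<tau>) n) {h. on_path h}"

lemma decseq_prob_on_path: "decseq (prob_on_path i \<tau>)"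
proof (rule decseq_SucI)
  fix n
  have "prob_on_path i \<tau> (Suc n) \<le> measure_pmf.prob (hist_dist k (deviation i \<tau>) (Suc n)) {h. on_path (take n h)}"
    unfolding prob_on_path_def by (rule measure_pmf.finite_measure_mono) (auto simp: on_path_take)
  also have "\<dots> = prob_on_path i \<tau> n" unfolding prob_on_path_def by (rule prob_take_hist_dist) simp
  finally show "prob_on_path i \<tau> (Suc n) \<le> prob_on_path i \<tau> n" .
qed

lemma expected_average_le:
  assumes i: "i < k" and \<tau>: "valid_strat A i \<tau>" and N: "0 < N" and T: "0 < T"
  shows "measure_pmf.expectation (hist_dist k (deviation i \<tau>) T) (\<lambda>h. (\<Sum>s=1..T. stage_util k u i h s) / real T)
    \<le> t i + 2 / real N + (max (path_excess i T) 0 + punish_slack T) / real T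
      + 2 * (prob_on_path i \<tau> (T div N) - prob_on_path i \<tau> T)"
proof -
  let ?M = "hist_dist k (deviation i \<tau>) T"
  let ?E = "{h. on_path (take (T div N) h) \<and> \<not> on_path h}"
  define K where "K = t i + 2 / real N + (max (path_excess i T) 0 + punish_slack T) / real T"
  have fin: "finite (set_pmf ?M)" by (rule finite_set_pmf_hist_dist_deviation[OF i \<tau>])
  have "(\<Sum>s=1..T. stage_util k u i h s) / real T \<le> K + 2 * indicator ?E h" if h: "h \<in> set_pmf ?M" for h
  proof -
    have "(\<Sum>s=1..T. stage_util k u i h s) / real T \<le> (real T * t i + 2 * real T / real N
        + 2 * real T * indicator ?E h + max (path_excess i T) 0 + punish_slack T) / real T"
      by (rule divide_right_mono[OF sum_stage_le[OF i consistent_hist_dist[OF i \<tau> h] N]]) simp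
    also have "\<dots> = K + 2 * indicator ?E h" unfolding K_def using T by (simp add: field_simps)
    finally show ?thesis .
  qed
  then have "measure_pmf.expectation ?M (\<lambda>h. (\<Sum>s=1..T. stage_util k u i h s) / real T)
      \<le> measure_pmf.expectation ?M (\<lambda>h. K + 2 * indicator ?E h)"
    by (intro integral_mono_AE) (use fin in \<open>auto simp: integrable_measure_pmf_finite AE_measure_pmf_iff\<close>)
  also have "\<dots> = K + 2 * measure_pmf.prob ?M ?E"
    using fin by (simp add: integrable_measure_pmf_finite)
  also have "measure_pmf.prob ?M ?E
      = measure_pmf.prob ?M {h. on_path (take (T div N) h)} - measure_pmf.prob ?M {h. on_path h}"
  proof -
    have "?E = {h. on_path (take (T div N) h)} - {h. on_path h}" by auto
    moreover have "{h. on_path h} \<subseteq> {h. on_path (take (T div N) h)}" by (auto simp: on_path_take)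
    ultimately show ?thesis
      using measure_pmf.finite_measure_Diff[where A = "{h. on_path (take (T div N) h)}" and B = "{h. on_path h}"]
      by simp
  qed
  also have "measure_pmf.prob ?M {h. on_path (take (T div N) h)} = prob_on_path i \<tau> (T div N)"
    unfolding prob_on_path_def by (rule prob_take_hist_dist) simp
  finally show ?thesis unfolding K_def prob_on_path_def by simp
qed

text \<open>The probability of staying on the path converges, so the charge for late deviations
  vanishes; letting \<open>N\<close> grow then removes the \<open>2 / N\<close>.\<close>

lemma game_utility_deviation_le_add:
  assumes i: "i < k" and \<tau>: "valid_strat A i \<tau>" and N: "0 < N"
  shows "game_utility k u (deviation i \<tau>) i \<le> ereal (t i + 2 / real N)"
proof -
  obtain P where P: "prob_on_path i \<tau> \<longlonglongrightarrow> P"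
    using decseq_convergent[OF decseq_prob_on_path, of 0 i \<tau>] unfolding prob_on_path_def by auto
  define a where "a T = t i + 2 / real N + (2 + punish_slack T) / real T
    + 2 * (prob_on_path i \<tau> (T div N) - prob_on_path i \<tau> T)" for T
  have "a \<longlonglongrightarrow> t i + 2 / real N + 0 + 2 * (P - P)"
    unfolding a_def
    by (intro tendsto_add tendsto_mult tendsto_diff tendsto_const tendsto_punish_slack_div P
        filterlim_compose[OF P filterlim_at_top_div_const_nat[OF N]])
  then have a: "(\<lambda>T. ereal (a T)) \<longlonglongrightarrow> ereal (t i + 2 / real N)" by (simp add: tendsto_ereal)
  have "\<forall>\<^sub>F T in sequentially.
     ereal (measure_pmf.expectation (hist_dist k (deviation i \<tau>) T) (\<lambda>h. (\<Sum>s=1..T. stage_util k u i h s) / real T))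
       \<le> ereal (a T) + ereal (max (path_excess i T / real T) 0)"
  proof (rule eventually_sequentiallyI[of 1])
    fix T :: nat assume T: "1 \<le> T"
    have "max (path_excess i T) 0 / real T = max (path_excess i T / real T) 0"
      using T by (simp add: max_def divide_le_0_iff)
    then have "(max (path_excess i T) 0 + punish_slack T) / real T
        \<le> (2 + punish_slack T) / real T + max (path_excess i T / real T) 0"
      using T by (simp add: add_divide_distrib divide_right_mono)
    then have "measure_pmf.expectation (hist_dist k (deviation i \<tau>) T) (\<lambda>h. (\<Sum>s=1..T. stage_util k u i h s) / real T)
       \<le> a T + max (path_excess i T / real T) 0"
      using expected_average_le[OF i \<tau> N, of T] T unfolding a_def by linarith
    then show "ereal (measure_pmf.expectation (hist_dist k (deviation i \<tau>) T) (\<lambda>h. (\<Sum>s=1..T. stage_util k u i h s) / real T))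
       \<le> ereal (a T) + ereal (max (path_excess i T / real T) 0)"
      by (simp only: plus_ereal.simps(1) ereal_less_eq(3))
  qed
  then have "game_utility k u (deviation i \<tau>) i \<le> liminf (\<lambda>T. ereal (a T) + ereal (max (path_excess i T / real T) 0))"
    unfolding game_utility_def by (rule Liminf_mono)
  also have "\<dots> = ereal (t i + 2 / real N) + liminf (\<lambda>T. ereal (max (path_excess i T / real T) 0))"
    by (rule ereal_liminf_lim_add[OF a]) simp
  also have "\<dots> \<le> ereal (t i + 2 / real N) + 0"
    by (intro add_left_mono liminf_max_0_le liminf_path_excess_le[OF i])
  finally show ?thesis by simp
qed

lemma game_utility_deviation_le:
  assumes i: "i < k" and \<tau>: "valid_strat A i \<tau>"
  shows "game_utility k u (deviation i \<tau>) i \<le> ereal (t i)"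
proof (rule LIMSEQ_le_const)
  show "(\<lambda>N. ereal (t i + 2 / real N)) \<longlonglongrightarrow> ereal (t i)"
    using tendsto_ereal[OF tendsto_add[OF tendsto_const lim_const_over_n[of 2]], of "t i"] by simp
  show "\<exists>N0. \<forall>N\<ge>N0. game_utility k u (deviation i \<tau>) i \<le> ereal (t i + 2 / real N)"
    using game_utility_deviation_le_add[OF i \<tau>] by (auto intro!: exI[of _ 1])
qed

lemma trigger_equilibrium:
  "valid_pure k A trigger \<and> is_equilibrium k A u (pure_profile trigger) \<and>
   (\<forall>i<k. game_utility k u (pure_profile trigger) i = ereal (t i))"
  using valid_pure_trigger game_utility_trigger game_utility_deviation_le
  unfolding is_equilibrium_def valid_profile_def valid_strat_def valid_pure_def pure_profile_def deviation_def
  by auto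

end

theorem lemma4:
  fixes k :: nat and A :: "nat \<Rightarrow> 'a set" and u :: "nat \<Rightarrow> 'a list \<Rightarrow> real"
    and t :: "nat \<Rightarrow> real"
  assumes "0 < k"
    and "\<And>i. i < k \<Longrightarrow> finite (A i) \<and> A i \<noteq> {}"
    and "\<And>i a. i < k \<Longrightarrow> valid_vec k A a \<Longrightarrow> \<bar>u i a\<bar> \<le> 1"
    and "\<And>i. i < k \<Longrightarrow> nu k A u i \<le> ereal (t i)"
  shows "(\<exists>f. valid_pure k A f \<and> is_equilibrium k A u (pure_profile f) \<and>
             (\<forall>i<k. game_utility k u (pure_profile f) i = ereal (t i)))
     \<longleftrightarrow> (\<exists>p. is_inf_path k A p \<and> (\<forall>i<k. mean_payoff u p i = ereal (t i)))"
proof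
  interpret alternating_game k A u using assms(1-3) by unfold_locales auto
  show "\<exists>p. is_inf_path k A p \<and> (\<forall>i<k. mean_payoff u p i = ereal (t i))"
    if "\<exists>f. valid_pure k A f \<and> is_equilibrium k A u (pure_profile f) \<and>
      (\<forall>i<k. game_utility k u (pure_profile f) i = ereal (t i))"
    using that exists_path_of_pure_profile by blast
  show "\<exists>f. valid_pure k A f \<and> is_equilibrium k A u (pure_profile f) \<and>
      (\<forall>i<k. game_utility k u (pure_profile f) i = ereal (t i))"
    if "\<exists>p. is_inf_path k A p \<and> (\<forall>i<k. mean_payoff u p i = ereal (t i))"
  proof -
    from that obtain p where "is_inf_path k A p" "\<forall>i<k. mean_payoff u p i = ereal (t i)" by blast
    then interpret path_game k A u p t using assms(4) by unfold_locales auto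
    show ?thesis using trigger_equilibrium by blast
  qed
qed

end
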